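(* Consider the Hermitean matrix model described in the context. Let $B\geq 2$, $N_1\geq 2$, $N_2,\dots,N_B\geq 1$, and let all indices $a^\beta_i\in\{0,\dots,\mathcal{N}\}$ ($1\le\beta\le B$, $1\le i\le N_\beta$) be pairwise different. Then \[ G_{|a^1_1\dots a^1_{N_1}|\dots|a^B_1\dots a^B_{N_B}|}=\lambda\,\frac{G_{|a^1_1a^1_3\dots a^1_{N_1}|a^2_1\dots a^2_{N_2}|\dots|a^B_1\dots a^B_{N_B}|}-G_{|a^1_2a^1_3\dots a^1_{N_1}|a^2_1\dots a^2_{N_2}|\dots|a^B_1\dots a^B_{N_B}|}}{E_{a^1_1}^2-E_{a^1_2}^2}. \]
   Context: Fix an integer $\mathcal{N}\geq 1$, a constant $V>0$, a coupling constant $\lambda$ (real or complex), a constant $\kappa$, a mass $\mu>0$ and a differentiable strictly increasing function $e:\mathbb{R}_+\to\mathbb{R}_+$ with $e(0)=0$; put $E_m:=\mu^2\big(\frac12+e\big(\frac{m}{\mu^2V}\big)\big)$, $m=0,\dots,\mathcal{N}$, and $E=\mathrm{diag}(E_0,\dots,E_{\mathcal{N}})$. For Hermitean $(\mathcal{N}+1)\times(\mathcal{N}+1)$ matrices $\Phi$ let $S[\Phi]=V\,\mathrm{tr}(E\Phi^2+\kappa\Phi+\frac{\lambda}{3}\Phi^3)$ and define the partition function $\mathcal{Z}[J]=\int\mathcal{D}\Phi\,\exp(-S[\Phi]+V\,\mathrm{tr}(J\Phi))$ for a source matrix $J$, understood as a formal perturbation series in $\lambda$ (i.e. $\mathcal{Z}[J]=K\exp\big(-\frac{\lambda}{3V^2}\sum_{m,n,k}\frac{\partial^3}{\partial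 J_{mn}\partial J_{nk}\partial J_{km}}\big)\exp\big(\sum_{m,n}\frac V2(J_{nm}-\kappa\delta_{nm})\frac{1}{E_n+E_m}(J_{mn}-\kappa\delta_{nm})\big)$), with the entries $J_{mn}$ treated as independent variables. Write $\frac{\partial^N}{\partial\mathbb{J}_{a_1\dots a_N}}:=\frac{\partial^N}{\partial J_{a_1a_2}\cdots\partial J_{a_{N-1}a_N}\partial J_{a_Na_1}}$ (for $N=1$ this is $\frac{\partial}{\partial J_{a_1a_1}}$). For pairwise different indices the correlation functions with $B$ boundary components (cycles) of lengths $N_1,\dots,N_B$ are \[ G_{|a^1_1\dots a^1_{N_1}|\dots|a^B_1\dots a^B_{N_B}|}=V^{B-2}\frac{\partial^{N_1}}{\partial\mathbb{J}_{a^1_1\dots a^1_{N_1}}}\cdots\frac{\partial^{N_B}}{\partial\mathbb{J}_{a^B_1\dots a^B_{N_B}}}\log\frac{\mathcal{Z}[J]}{\mathcal{Z}[0]}\Big|_{J=0}. \] *)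

theory Defs
  imports "HOL-Complex_Analysis.Complex_Analysis" "HOL-Computational_Algebra.Formal_Power_Series"
begin

definition Eval :: "real \<Rightarrow> real \<Rightarrow> (real \<Rightarrow> real) \<Rightarrow> nat \<Rightarrow> real" where
  "Eval \<mu> V e m = \<mu>\<^sup>2 * (1/2 + e (real m / (\<mu>\<^sup>2 * V)))"

text \<open>Source matrices: entries J m n are independent complex variables
  (only indices in 0..NN matter).\<close>
type_synonym src = "nat \<Rightarrow> nat \<Rightarrow> complex"

definition pd :: "nat \<Rightarrow> nat \<Rightarrow> (src \<Rightarrow> complex) \<Rightarrow> src \<Rightarrow> complex" where
  "pd m n f J = deriv (\<lambda>z. f (J(m := (J m)(n := z)))) (J m n)"

definition Delta :: "nat \<Rightarrow> (src \<Rightarrow> complex) \<Rightarrow> src \<Rightarrow> complex" where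
  "Delta NN f = (\<lambda>J. \<Sum>m\<le>NN. \<Sum>n\<le>NN. \<Sum>k\<le>NN. pd m n (pd n k (pd k m f)) J)"

definition Wfree :: "nat \<Rightarrow> real \<Rightarrow> real \<Rightarrow> (nat \<Rightarrow> real) \<Rightarrow> src \<Rightarrow> complex" where
  "Wfree NN V \<kappa> E J = (\<Sum>m\<le>NN. \<Sum>n\<le>NN.
      complex_of_real (V/2) * (J n m - (if n = m then complex_of_real \<kappa> else 0))
      * complex_of_real (1 / (E n + E m)) * (J m n - (if n = m then complex_of_real \<kappa> else 0)))"

text \<open>Z[J] as a formal power series in lambda (the constant K is set to 1; it cancels
  in Z[J]/Z[0]). The coefficient of lambda^k of exp(-lambda/(3V^2) Delta) exp(W).\<close>
definition Zfps :: "nat \<Rightarrow> real \<Rightarrow> real \<Rightarrow> (nat \<Rightarrow> real) \<Rightarrow> src \<Rightarrow> complex fps" where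
  "Zfps NN V \<kappa> E J = Abs_fps (\<lambda>k.
      (complex_of_real (- 1 / (3 * V\<^sup>2))) ^ k / of_nat (fact k)
      * ((Delta NN ^^ k) (\<lambda>J'. exp (Wfree NN V \<kappa> E J')) J))"

definition fpslog :: "complex fps \<Rightarrow> complex fps" where
  "fpslog F = fps_const (Ln (F $ 0)) + (fps_ln 1 oo (F / fps_const (F $ 0) - 1))"

definition cycle_pairs :: "nat list \<Rightarrow> (nat \<times> nat) list" where
  "cycle_pairs a = zip a (tl a @ [hd a])"

definition dcycle :: "nat list \<Rightarrow> (src \<Rightarrow> complex) \<Rightarrow> src \<Rightarrow> complex" where
  "dcycle a f = foldr (\<lambda>(m, n) g. pd m n g) (cycle_pairs a) f"

definition dall :: "nat list list \<Rightarrow> (src \<Rightarrow> complex) \<Rightarrow> src \<Rightarrow> complex" where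
  "dall bs f = foldr dcycle bs f"

definition Gcorr :: "nat \<Rightarrow> real \<Rightarrow> real \<Rightarrow> (nat \<Rightarrow> real) \<Rightarrow> nat list list \<Rightarrow> complex fps" where
  "Gcorr NN V \<kappa> E bs = Abs_fps (\<lambda>k.
      complex_of_real (V powi (int (length bs) - 2))
      * dall bs (\<lambda>J. fpslog (Zfps NN V \<kappa> E J / Zfps NN V \<kappa> E (\<lambda>_ _. 0)) $ k) (\<lambda>_ _. 0))"

end

theory Submission
  imports Defs
begin

(*
  Z[J] = exp(-lambda/(3V^2) Delta) exp W[J] is treated coefficientwise in lambda; every
  coefficient is an exp-polynomial in finitely many source entries. For p ~= q the free part
  satisfies d/dJ_pq exp W = V/(E_p+E_q) J_qp exp W, and commuting Delta^k past the factor J_qp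
  produces 3k C_pq with C_pq = sum_l d/dJ_pl d/dJ_lq. On exp W the Ward identity
  (E_p - E_q)/V C_pq = L_pq holds for L_pq = sum_l (J_lp d/dJ_lq - J_ql d/dJ_pl), and L_pq
  commutes with Delta. Hence Z obeys the Schwinger-Dyson equation
    (E_p^2 - E_q^2) d/dJ_pq Z = V (E_p - E_q) J_qp Z - lambda L_pq Z,
  and log Z the same equation with the lambda-independent inhomogeneity V (E_p - E_q) J_qp.
  Taking p q = a1 a2 and differentiating along the remaining edges of all boundary cycles at
  J = 0, the inhomogeneity dies (there are at least two further edges since B >= 2), while
  L_pq survives only through the edges into a1 and out of a2, which cut the first cycle into
  the cycles a1 a3 ... aN and a2 a3 ... aN.
*)

lemma sum_if_zero:
  "(\<Sum>x\<in>A. if P then f x else 0) = (if P then sum f A else (0::'a::comm_monoid_add))"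
  by simp

lemma triple_sum_kronecker:
  fixes g :: "nat \<Rightarrow> nat \<Rightarrow> nat \<Rightarrow> 'a::comm_monoid_add"
  assumes "a \<le> N" "b \<le> N"
  shows "(\<Sum>m\<le>N. \<Sum>n\<le>N. \<Sum>k\<le>N. if a = m \<and> b = n then g m n k else 0) = (\<Sum>k\<le>N. g a b k)"
    and "(\<Sum>m\<le>N. \<Sum>n\<le>N. \<Sum>k\<le>N. if a = n \<and> b = k then g m n k else 0) = (\<Sum>m\<le>N. g m a b)"
    and "(\<Sum>m\<le>N. \<Sum>n\<le>N. \<Sum>k\<le>N. if a = k \<and> b = m then g m n k else 0) = (\<Sum>n\<le>N. g b n a)"
  using assms
  by (simp_all add: if_if_eq_conj[symmetric] sum.delta' sum_if_zero conj_commute[of "a = k" for k]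
      sum.swap[of _ "{..N}"] cong: if_cong)

lemma double_sum_kronecker:
  fixes g :: "nat \<Rightarrow> nat \<Rightarrow> 'a::comm_monoid_add"
  assumes "a \<le> N" "b \<le> N"
  shows "(\<Sum>x\<le>N. \<Sum>y\<le>N. if x = a \<and> y = b then g x y else 0) = g a b"
    and "(\<Sum>x\<le>N. \<Sum>y\<le>N. if y = b \<and> x = a then g x y else 0) = g a b"
  using assms by (simp_all add: if_if_eq_conj[symmetric] sum.delta sum_if_zero cong: if_cong)

section \<open>Smooth functions of the source\<close>

definition set_entry :: "src \<Rightarrow> nat \<Rightarrow> nat \<Rightarrow> complex \<Rightarrow> src" where
  "set_entry J m n z = J(m := (J m)(n := z))"

lemma set_entry_same [simp]: "set_entry J m n (J m n) = J"
  by (auto simp: set_entry_def)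

lemma set_entry_apply: "set_entry J m n z a b = (if a = m \<and> b = n then z else J a b)"
  by (auto simp: set_entry_def)

lemma pd_set_entry: "pd m n f J = deriv (\<lambda>z. f (set_entry J m n z)) (J m n)"
  by (simp add: pd_def set_entry_def)

text \<open>Every coefficient of the perturbation series lies in this class.\<close>

inductive smooth :: "(src \<Rightarrow> complex) \<Rightarrow> bool" where
  smooth_const: "smooth (\<lambda>J. c)"
| smooth_entry: "smooth (\<lambda>J. J a b)"
| smooth_add: "smooth f \<Longrightarrow> smooth g \<Longrightarrow> smooth (\<lambda>J. f J + g J)"
| smooth_mult: "smooth f \<Longrightarrow> smooth g \<Longrightarrow> smooth (\<lambda>J. f J * g J)"
| smooth_exp: "smooth f \<Longrightarrow> smooth (\<lambda>J. exp (f J))"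

lemma smooth_has_smooth_partial_derivative:
  assumes "smooth f"
  shows "\<exists>f'. smooth f' \<and>
    (\<forall>J z. ((\<lambda>w. f (set_entry J m n w)) has_field_derivative f' (set_entry J m n z)) (at z))"
  using assms
proof induction
  case (smooth_const c)
  show ?case by (intro exI[of _ "\<lambda>J. 0"]) (auto intro: smooth.intros derivative_eq_intros)
next
  case (smooth_entry a b)
  show ?case
    by (intro exI[of _ "\<lambda>J. if a = m \<and> b = n then 1 else 0"] conjI allI smooth_const)
      (auto simp: set_entry_apply intro!: derivative_eq_intros)
next
  case (smooth_add f g)
  then obtain f' g' where "smooth f'" "smooth g'"
    and "\<And>J z. ((\<lambda>w. f (set_entry J m n w)) has_field_derivative f' (set_entry J m n z)) (at z)"
    and "\<And>J z. ((\<lambda>w. g (set_entry J m n w)) has_field_derivative g' (set_entry J m n z)) (at z)"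
    by blast
  then show ?case
    by (intro exI[of _ "\<lambda>J. f' J + g' J"] conjI allI smooth.intros derivative_intros)
next
  case (smooth_mult f g)
  then obtain f' g' where "smooth f'" "smooth g'"
    and df: "\<And>J z. ((\<lambda>w. f (set_entry J m n w)) has_field_derivative f' (set_entry J m n z)) (at z)"
    and dg: "\<And>J z. ((\<lambda>w. g (set_entry J m n w)) has_field_derivative g' (set_entry J m n z)) (at z)"
    by blast
  show ?case
  proof (intro exI[of _ "\<lambda>J. f J * g' J + f' J * g J"] conjI allI)
    show "smooth (\<lambda>J. f J * g' J + f' J * g J)"
      by (intro smooth.intros smooth_mult.hyps \<open>smooth f'\<close> \<open>smooth g'\<close>)
    show "((\<lambda>w. f (set_entry J m n w) * g (set_entry J m n w)) has_field_derivative
        f (set_entry J m n z) * g' (set_entry J m n z)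
        + f' (set_entry J m n z) * g (set_entry J m n z)) (at z)" for J z
      using DERIV_mult[OF df dg] by (simp add: algebra_simps)
  qed
next
  case (smooth_exp f)
  then obtain f' where "smooth f'"
    and df: "\<And>J z. ((\<lambda>w. f (set_entry J m n w)) has_field_derivative f' (set_entry J m n z)) (at z)"
    by blast
  show ?case
  proof (intro exI[of _ "\<lambda>J. exp (f J) * f' J"] conjI allI)
    show "smooth (\<lambda>J. exp (f J) * f' J)" by (intro smooth.intros smooth_exp.hyps \<open>smooth f'\<close>)
    show "((\<lambda>w. exp (f (set_entry J m n w))) has_field_derivative
        exp (f (set_entry J m n z)) * f' (set_entry J m n z)) (at z)" for J z
      using DERIV_chain2[OF DERIV_exp df] by simp
  qed
qed

lemma
  assumes "smooth f"
  shows smooth_pd: "smooth (pd m n f)"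
    and has_field_derivative_pd:
      "((\<lambda>w. f (set_entry J m n w)) has_field_derivative pd m n f (set_entry J m n z)) (at z)"
proof -
  obtain f' where f': "smooth f'"
    "\<And>J z. ((\<lambda>w. f (set_entry J m n w)) has_field_derivative f' (set_entry J m n z)) (at z)"
    using smooth_has_smooth_partial_derivative[OF assms] by blast
  have "pd m n f = f'"
    using DERIV_imp_deriv[OF f'(2)] by (auto simp: pd_set_entry)
  with f' show "smooth (pd m n f)"
    "((\<lambda>w. f (set_entry J m n w)) has_field_derivative pd m n f (set_entry J m n z)) (at z)"
    by simp_all
qed

lemma has_field_derivative_pd_at_entry:
  "smooth f \<Longrightarrow> ((\<lambda>w. f (set_entry J m n w)) has_field_derivative pd m n f J) (at (J m n))"
  using has_field_derivative_pd[where J = J and m = m and n = n and z = "J m n"] by simp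

lemma pd_eqI:
  assumes "\<And>J. ((\<lambda>w. f (set_entry J m n w)) has_field_derivative g J) (at (J m n))"
  shows "pd m n f = g"
  using DERIV_imp_deriv[OF assms] by (auto simp: pd_set_entry)

lemma smooth_diff: "smooth f \<Longrightarrow> smooth g \<Longrightarrow> smooth (\<lambda>J. f J - g J)"
  using smooth_add[OF _ smooth_mult[OF smooth_const, of g "- 1"], of f] by simp

lemma smooth_sum: "(\<And>i. i \<in> A \<Longrightarrow> smooth (f i)) \<Longrightarrow> smooth (\<lambda>J. \<Sum>i\<in>A. f i J)"
  by (induction A rule: infinite_finite_induct) (auto intro: smooth.intros)

lemma smooth_if: "smooth f \<Longrightarrow> smooth (\<lambda>J. if P then f J else 0)"
  by (cases P) (auto intro: smooth_const)

lemma pd_const [simp]: "pd m n (\<lambda>J. c) = (\<lambda>J. 0)"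
  by (rule pd_eqI) (auto intro: derivative_eq_intros)

lemma pd_entry: "pd m n (\<lambda>J. J a b) = (\<lambda>J. if a = m \<and> b = n then 1 else 0)"
  by (rule pd_eqI) (auto simp: set_entry_apply intro!: derivative_eq_intros)

lemma pd_add:
  "smooth f \<Longrightarrow> smooth g \<Longrightarrow> pd m n (\<lambda>J. f J + g J) = (\<lambda>J. pd m n f J + pd m n g J)"
  by (rule pd_eqI) (auto intro!: derivative_intros has_field_derivative_pd_at_entry)

lemma pd_diff:
  "smooth f \<Longrightarrow> smooth g \<Longrightarrow> pd m n (\<lambda>J. f J - g J) = (\<lambda>J. pd m n f J - pd m n g J)"
  by (rule pd_eqI) (auto intro!: derivative_eq_intros has_field_derivative_pd_at_entry)

lemma pd_mult: "smooth f \<Longrightarrow> smooth g \<Longrightarrow>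
    pd m n (\<lambda>J. f J * g J) = (\<lambda>J. pd m n f J * g J + f J * pd m n g J)"
  by (rule pd_eqI) (auto intro!: derivative_eq_intros has_field_derivative_pd_at_entry)

lemma pd_cmult: "smooth f \<Longrightarrow> pd m n (\<lambda>J. c * f J) = (\<lambda>J. c * pd m n f J)"
  by (rule pd_eqI) (auto intro!: derivative_eq_intros has_field_derivative_pd_at_entry)

lemma pd_exp: "smooth f \<Longrightarrow> pd m n (\<lambda>J. exp (f J)) = (\<lambda>J. exp (f J) * pd m n f J)"
  by (rule pd_eqI) (auto intro!: derivative_eq_intros has_field_derivative_pd_at_entry)

lemma pd_entry_mult: "smooth h \<Longrightarrow>
    pd m n (\<lambda>J. J a b * h J) = (\<lambda>J. (if a = m \<and> b = n then h J else 0) + J a b * pd m n h J)"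
  by (rule ext) (simp add: pd_mult smooth_entry pd_entry)

lemma pd_if: "pd m n (\<lambda>J. if P then f J else 0) = (\<lambda>J. if P then pd m n f J else 0)"
  by (cases P) auto

lemma pd_sum: "(\<And>i. i \<in> A \<Longrightarrow> smooth (f i)) \<Longrightarrow>
    pd m n (\<lambda>J. \<Sum>i\<in>A. f i J) = (\<lambda>J. \<Sum>i\<in>A. pd m n (f i) J)"
proof (induction A rule: infinite_finite_induct)
  case (insert x F)
  then show ?case by (simp add: pd_add smooth_sum)
qed simp_all

lemma pd_double_sum: "(\<And>x y. smooth (F x y)) \<Longrightarrow>
    pd m n (\<lambda>J. \<Sum>x\<in>A. \<Sum>y\<in>B. F x y J) = (\<lambda>J. \<Sum>x\<in>A. \<Sum>y\<in>B. pd m n (F x y) J)"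
  by (simp add: pd_sum smooth_sum)

lemma pd_commute: "smooth f \<Longrightarrow> pd a b (pd c d f) = pd c d (pd a b f)"
proof (induction rule: smooth.induct)
  case (smooth_mult f g)
  then show ?case by (simp add: pd_mult pd_add smooth_pd smooth.intros algebra_simps)
next
  case (smooth_exp f)
  then show ?case by (simp add: pd_mult pd_exp smooth_pd smooth.intros algebra_simps)
qed (simp_all add: pd_entry pd_add smooth_pd)

lemma smooth_continuous_on: "smooth f \<Longrightarrow> continuous_on UNIV f"
proof (induction rule: smooth.induct)
  case (smooth_entry a b)
  have "continuous_on UNIV ((\<lambda>g. g b) \<circ> (\<lambda>J::src. J a))"
    by (intro continuous_on_compose continuous_on_subset[OF continuous_on_product_coordinates]) auto
  then show ?case by (simp add: o_def)
qed (auto intro!: continuous_intros)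

lemma continuous_on_set_entry: "continuous_on UNIV (set_entry J m n)"
  unfolding set_entry_def
proof (intro continuous_on_coordinatewise_then_product)
  show "continuous_on UNIV (\<lambda>z. (J(m := (J m)(n := z))) i j)" for i j
    by (cases "i = m"; cases "j = n") (auto intro: continuous_intros)
qed

lemma pd_cong_open:
  assumes "open U" "\<And>J. J \<in> U \<Longrightarrow> f J = g J" "J \<in> U"
  shows "pd m n f J = pd m n g J"
proof -
  have "open (set_entry J m n -` U)"
    using continuous_on_set_entry assms(1) by (simp add: continuous_on_open_vimage)
  moreover have "J m n \<in> set_entry J m n -` U" using assms(3) by simp
  ultimately have "eventually (\<lambda>z. z \<in> set_entry J m n -` U) (nhds (J m n))"
    by (rule eventually_nhds_in_open)
  then have "eventually (\<lambda>z. f (set_entry J m n z) = g (set_entry J m n z)) (nhds (J m n))"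
    by eventually_elim (use assms(2) in auto)
  then show ?thesis unfolding pd_set_entry by (rule deriv_cong_ev) simp
qed

definition pds :: "(nat \<times> nat) list \<Rightarrow> (src \<Rightarrow> complex) \<Rightarrow> src \<Rightarrow> complex" where
  "pds ds f = foldr (\<lambda>(m, n) g. pd m n g) ds f"

lemma pds_Nil [simp]: "pds [] f = f"
  by (simp add: pds_def)

lemma pds_Cons [simp]: "pds ((m, n) # ds) f = pd m n (pds ds f)"
  by (simp add: pds_def)

lemma pds_append: "pds (xs @ ys) f = pds xs (pds ys f)"
  by (simp add: pds_def)

lemma dall_eq_pds: "dall bs f = pds (concat (map cycle_pairs bs)) f"
  by (induction bs) (simp_all add: dall_def dcycle_def pds_def)

lemma smooth_pds: "smooth f \<Longrightarrow> smooth (pds ds f)"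
  by (induction ds) (auto simp: smooth_pd)

lemma pds_diff:
  "smooth f \<Longrightarrow> smooth g \<Longrightarrow> pds ds (\<lambda>J. f J - g J) = (\<lambda>J. pds ds f J - pds ds g J)"
  by (induction ds) (auto simp: pd_diff smooth_pds)

lemma pds_cmult: "smooth f \<Longrightarrow> pds ds (\<lambda>J. c * f J) = (\<lambda>J. c * pds ds f J)"
  by (induction ds) (auto simp: pd_cmult smooth_pds)

lemma pds_sum: "(\<And>i. i \<in> A \<Longrightarrow> smooth (f i)) \<Longrightarrow>
    pds ds (\<lambda>J. \<Sum>i\<in>A. f i J) = (\<lambda>J. \<Sum>i\<in>A. pds ds (f i) J)"
  by (induction ds) (auto simp: pd_sum smooth_pds)

lemma pds_const: "ds \<noteq> [] \<Longrightarrow> pds ds (\<lambda>J. c) = (\<lambda>J. 0)"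
  by (induction ds rule: induct_list012) auto

lemma pds_pd_commute: "smooth f \<Longrightarrow> pds ds (pd m n f) = pd m n (pds ds f)"
  by (induction ds) (auto simp: pd_commute smooth_pds)

lemma pds_entry_mult:
  assumes "distinct ds" "smooth h"
  shows "pds ds (\<lambda>J. J a b * h J) = (\<lambda>J. J a b * pds ds h J
      + (if (a, b) \<in> set ds then pds (remove1 (a, b) ds) h J else 0))"
  using assms(1)
proof (induction ds)
  case (Cons d ds)
  obtain m n where d: "d = (m, n)" by (cases d)
  have "smooth (\<lambda>J. if (a, b) \<in> set ds then pds (remove1 (a, b) ds) h J else 0)"
    by (intro smooth_if smooth_pds assms(2))
  with Cons show ?case
    by (auto simp: d pd_add pd_entry_mult pd_if smooth_pds assms(2) smooth_mult smooth_entry)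
qed simp

lemma pds_entry_mult_at_zero:
  assumes "distinct ds" "smooth h"
  shows "pds ds (\<lambda>J. J a b * h J) (\<lambda>_ _. 0)
    = (if (a, b) \<in> set ds then pds (remove1 (a, b) ds) h (\<lambda>_ _. 0) else 0)"
  using pds_entry_mult[OF assms, of a b] by simp

lemma pds_cong_open:
  assumes "open U" "\<And>J. J \<in> U \<Longrightarrow> f J = g J" "J \<in> U"
  shows "pds ds f J = pds ds g J"
  using assms(3)
proof (induction ds arbitrary: J)
  case (Cons d ds)
  then show ?case by (cases d) (auto intro: pd_cong_open[OF assms(1)])
qed (use assms(2) in simp)

section \<open>The cubic vertex and the Ward operator\<close>

lemma smooth_Delta: "smooth f \<Longrightarrow> smooth (Delta NN f)"
  unfolding Delta_def by (intro smooth_sum smooth_pd)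

lemma smooth_Delta_pow: "smooth f \<Longrightarrow> smooth ((Delta NN ^^ k) f)"
  by (induction k) (auto simp: smooth_Delta)

lemma Delta_const [simp]: "Delta NN (\<lambda>J. c) = (\<lambda>J. 0)"
  by (simp add: Delta_def)

lemma Delta_add: "smooth f \<Longrightarrow> smooth g \<Longrightarrow>
    Delta NN (\<lambda>J. f J + g J) = (\<lambda>J. Delta NN f J + Delta NN g J)"
  unfolding Delta_def by (auto simp: pd_add smooth_pd sum.distrib)

lemma Delta_diff: "smooth f \<Longrightarrow> smooth g \<Longrightarrow>
    Delta NN (\<lambda>J. f J - g J) = (\<lambda>J. Delta NN f J - Delta NN g J)"
  unfolding Delta_def by (auto simp: pd_diff smooth_pd sum_subtractf)

lemma Delta_cmult: "smooth f \<Longrightarrow> Delta NN (\<lambda>J. c * f J) = (\<lambda>J. c * Delta NN f J)"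
  unfolding Delta_def by (auto simp: pd_cmult smooth_pd sum_distrib_left)

lemma Delta_sum: "(\<And>i. i \<in> A \<Longrightarrow> smooth (f i)) \<Longrightarrow>
    Delta NN (\<lambda>J. \<Sum>i\<in>A. f i J) = (\<lambda>J. \<Sum>i\<in>A. Delta NN (f i) J)"
  unfolding Delta_def by (rule ext) (simp add: pd_sum smooth_pd sum.swap[of _ A])

lemma Delta_pd_commute: "smooth f \<Longrightarrow> Delta NN (pd a b f) = pd a b (Delta NN f)"
  unfolding Delta_def by (simp add: pd_sum smooth_sum smooth_pd pd_commute)

lemma Delta_pow_pd_commute: "smooth f \<Longrightarrow> (Delta NN ^^ k) (pd a b f) = pd a b ((Delta NN ^^ k) f)"
  by (induction k) (auto simp: Delta_pd_commute smooth_Delta_pow)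

lemma Delta_pow_cmult: "smooth f \<Longrightarrow> (Delta NN ^^ k) (\<lambda>J. c * f J) = (\<lambda>J. c * (Delta NN ^^ k) f J)"
  by (induction k) (auto simp: Delta_cmult smooth_Delta_pow)

definition pd_chain :: "nat \<Rightarrow> nat \<Rightarrow> nat \<Rightarrow> (src \<Rightarrow> complex) \<Rightarrow> src \<Rightarrow> complex" where
  "pd_chain NN p q f = (\<lambda>J. \<Sum>l\<le>NN. pd p l (pd l q f) J)"

text \<open>\<open>ward_op NN p q\<close> generates the infinitesimal rotations \<open>J \<mapsto> U J U\<^sup>-\<^sup>1\<close> of the
  source; \<open>Delta\<close>, a trace of third derivatives, is invariant under them.\<close>

definition ward_op :: "nat \<Rightarrow> nat \<Rightarrow> nat \<Rightarrow> (src \<Rightarrow> complex) \<Rightarrow> src \<Rightarrow> complex" where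
  "ward_op NN p q f = (\<lambda>J. \<Sum>l\<le>NN. J l p * pd l q f J - J q l * pd p l f J)"

lemma smooth_pd_chain: "smooth f \<Longrightarrow> smooth (pd_chain NN p q f)"
  unfolding pd_chain_def by (intro smooth_sum smooth_pd)

lemma smooth_ward_op: "smooth f \<Longrightarrow> smooth (ward_op NN p q f)"
  unfolding ward_op_def by (intro smooth_sum smooth_diff smooth_mult smooth_entry smooth_pd)

lemma Delta_pd_chain_commute:
  "smooth f \<Longrightarrow> Delta NN (pd_chain NN p q f) = pd_chain NN p q (Delta NN f)"
  by (simp add: pd_chain_def Delta_sum smooth_pd Delta_pd_commute)

lemma Delta_pow_pd_chain_commute:
  "smooth f \<Longrightarrow> (Delta NN ^^ k) (pd_chain NN p q f) = pd_chain NN p q ((Delta NN ^^ k) f)"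
  by (induction k) (auto simp: Delta_pd_chain_commute smooth_Delta_pow)

lemma ward_op_cmult: "smooth f \<Longrightarrow> ward_op NN p q (\<lambda>J. c * f J) = (\<lambda>J. c * ward_op NN p q f J)"
  unfolding ward_op_def by (rule ext) (simp add: pd_cmult sum_distrib_left algebra_simps)

lemma Delta_entry_mult:
  assumes "smooth h" "a \<le> NN" "b \<le> NN"
  shows "Delta NN (\<lambda>J. J a b * h J) = (\<lambda>J. J a b * Delta NN h J + 3 * pd_chain NN b a h J)"
proof
  fix J
  let ?h2 = "\<lambda>x y x' y'. pd x y (pd x' y' h) J"
  have "smooth (pd x y h)" "smooth (pd x y (pd x' y' h))" for x y x' y'
    using assms(1) by (auto intro: smooth_pd)
  then have "pd m n (pd n k (pd k m (\<lambda>J. J a b * h J))) J = J a b * pd m n (pd n k (pd k m h)) J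
     + (if a = m \<and> b = n then ?h2 n k k m else 0)
     + (if a = n \<and> b = k then ?h2 m n k m else 0)
     + (if a = k \<and> b = m then ?h2 m n n k else 0)" for m n k
    using assms(1)
    by (simp add: pd_entry_mult pd_add pd_if smooth_mult smooth_entry smooth_add smooth_if add_ac)
  then have "Delta NN (\<lambda>J. J a b * h J) J = J a b * Delta NN h J
     + (\<Sum>m\<le>NN. \<Sum>n\<le>NN. \<Sum>k\<le>NN. if a = m \<and> b = n then ?h2 n k k m else 0)
     + (\<Sum>m\<le>NN. \<Sum>n\<le>NN. \<Sum>k\<le>NN. if a = n \<and> b = k then ?h2 m n k m else 0)
     + (\<Sum>m\<le>NN. \<Sum>n\<le>NN. \<Sum>k\<le>NN. if a = k \<and> b = m then ?h2 m n n k else 0)"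
    unfolding Delta_def by (simp only: sum.distrib sum_distrib_left)
  also have "\<dots> = J a b * Delta NN h J
     + (\<Sum>k\<le>NN. ?h2 b k k a) + (\<Sum>m\<le>NN. ?h2 m a b m) + (\<Sum>n\<le>NN. ?h2 b n n a)"
    using assms(2,3) by (simp only: triple_sum_kronecker)
  also have "\<dots> = J a b * Delta NN h J + 3 * pd_chain NN b a h J"
    using assms(1) by (simp add: pd_chain_def pd_commute[of h _ a])
  finally show "Delta NN (\<lambda>J. J a b * h J) J = J a b * Delta NN h J + 3 * pd_chain NN b a h J" .
qed

lemma Delta_pow_entry_mult:
  assumes "smooth h" "p \<le> NN" "q \<le> NN"
  shows "(Delta NN ^^ k) (\<lambda>J. J q p * h J) = (\<lambda>J. J q p * (Delta NN ^^ k) h J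
      + of_nat (3 * k) * pd_chain NN p q ((Delta NN ^^ (k - 1)) h) J)"
proof (induction k)
  case (Suc k)
  have smooth_pow: "smooth ((Delta NN ^^ j) h)" for j
    using assms(1) by (rule smooth_Delta_pow)
  have chain_step: "Delta NN (\<lambda>J. of_nat (3 * k) * pd_chain NN p q ((Delta NN ^^ (k - 1)) h) J)
      = (\<lambda>J. of_nat (3 * k) * pd_chain NN p q ((Delta NN ^^ k) h) J)"
  proof (cases k)
    case (Suc j)
    then show ?thesis
      by (simp add: Delta_cmult smooth_pd_chain smooth_pow Delta_pd_chain_commute)
  qed (simp add: Delta_cmult smooth_pd_chain smooth_pow)
  have "(Delta NN ^^ Suc k) (\<lambda>J. J q p * h J) = Delta NN (\<lambda>J. J q p * (Delta NN ^^ k) h J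
      + of_nat (3 * k) * pd_chain NN p q ((Delta NN ^^ (k - 1)) h) J)"
    using Suc by simp
  also have "\<dots> = (\<lambda>J. Delta NN (\<lambda>J. J q p * (Delta NN ^^ k) h J) J
      + Delta NN (\<lambda>J. of_nat (3 * k) * pd_chain NN p q ((Delta NN ^^ (k - 1)) h) J) J)"
    by (intro Delta_add smooth_mult smooth_entry smooth_const smooth_pow smooth_pd_chain)
  also have "\<dots> = (\<lambda>J. J q p * (Delta NN ^^ Suc k) h J + 3 * pd_chain NN p q ((Delta NN ^^ k) h) J
      + of_nat (3 * k) * pd_chain NN p q ((Delta NN ^^ k) h) J)"
    unfolding chain_step using assms smooth_pow by (simp add: Delta_entry_mult)
  finally show ?case by (simp add: algebra_simps)
qed simp

lemma Delta_ward_op_commute: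
  assumes "smooth f" "p \<le> NN" "q \<le> NN"
  shows "Delta NN (ward_op NN p q f) = ward_op NN p q (Delta NN f)"
proof
  fix J
  have smooth_pd_f: "smooth (pd l q f)" "smooth (pd p l f)" for l
    using assms(1) by (auto intro: smooth_pd)
  have "Delta NN (ward_op NN p q f) J
      = (\<Sum>l\<le>NN. Delta NN (\<lambda>J. J l p * pd l q f J - J q l * pd p l f J) J)"
    unfolding ward_op_def
    using smooth_pd_f by (simp add: Delta_sum smooth_diff smooth_mult smooth_entry)
  also have "\<dots> = (\<Sum>l\<le>NN. J l p * Delta NN (pd l q f) J + 3 * pd_chain NN p l (pd l q f) J
      - (J q l * Delta NN (pd p l f) J + 3 * pd_chain NN l q (pd p l f) J))"
    using assms smooth_pd_f
    by (intro sum.cong refl) (simp add: Delta_diff smooth_mult smooth_entry Delta_entry_mult)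
  also have "\<dots> = (\<Sum>l\<le>NN. J l p * pd l q (Delta NN f) J - J q l * pd p l (Delta NN f) J)
     + 3 * ((\<Sum>l\<le>NN. pd_chain NN p l (pd l q f) J) - (\<Sum>l\<le>NN. pd_chain NN l q (pd p l f) J))"
    using assms(1)
    by (simp add: Delta_pd_commute sum_subtractf sum.distrib sum_distrib_left algebra_simps)
  also have "(\<Sum>l\<le>NN. pd_chain NN l q (pd p l f) J) = (\<Sum>l\<le>NN. \<Sum>m\<le>NN. pd p l (pd l m (pd m q f)) J)"
    unfolding pd_chain_def using assms(1) by (simp add: pd_commute smooth_pd)
  also have "(\<Sum>l\<le>NN. pd_chain NN p l (pd l q f) J) = (\<Sum>l\<le>NN. \<Sum>m\<le>NN. pd p l (pd l m (pd m q f)) J)"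
    unfolding pd_chain_def by (rule sum.swap)
  finally show "Delta NN (ward_op NN p q f) J = ward_op NN p q (Delta NN f) J"
    unfolding ward_op_def by simp
qed

lemma Delta_pow_ward_op_commute:
  "smooth f \<Longrightarrow> p \<le> NN \<Longrightarrow> q \<le> NN \<Longrightarrow>
    (Delta NN ^^ k) (ward_op NN p q f) = ward_op NN p q ((Delta NN ^^ k) f)"
  by (induction k) (auto simp: Delta_ward_op_commute smooth_Delta_pow)

definition Wfree_grad :: "real \<Rightarrow> real \<Rightarrow> (nat \<Rightarrow> real) \<Rightarrow> nat \<Rightarrow> nat \<Rightarrow> src \<Rightarrow> complex" where
  "Wfree_grad V \<kappa> E m n J =
    complex_of_real (V / (E m + E n)) * (J n m - (if m = n then complex_of_real \<kappa> else 0))"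

lemma smooth_Wfree: "smooth (Wfree NN V \<kappa> E)"
  unfolding Wfree_def[abs_def]
  by (intro smooth_sum smooth_mult smooth_diff smooth_const smooth_entry)

lemma smooth_Wfree_grad: "smooth (Wfree_grad V \<kappa> E m n)"
  unfolding Wfree_grad_def[abs_def] by (intro smooth_mult smooth_diff smooth_const smooth_entry)

lemma pd_Wfree_summand:
  "pd a b (\<lambda>J. A * (J n m - c) * B * (J m n - c)) = (\<lambda>J.
     (if n = a \<and> m = b then A * B * (J m n - c) else 0)
     + (if m = a \<and> n = b then A * B * (J n m - c) else 0))"
proof -
  have smooth_factor: "smooth (\<lambda>J. J x y - c)" for x y
    by (intro smooth_diff smooth_entry smooth_const)
  have pd_factor: "pd a b (\<lambda>J. J x y - c) = (\<lambda>J. if x = a \<and> y = b then 1 else 0)" for x y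
    by (simp add: pd_diff[OF smooth_entry smooth_const] pd_entry)
  have "(\<lambda>J. A * (J n m - c) * B * (J m n - c)) = (\<lambda>J. (A * B) * ((J n m - c) * (J m n - c)))"
    by (simp add: ac_simps)
  then have "pd a b (\<lambda>J. A * (J n m - c) * B * (J m n - c)) = (\<lambda>J. (A * B)
      * ((if n = a \<and> m = b then 1 else 0) * (J m n - c)
         + (J n m - c) * (if m = a \<and> n = b then 1 else 0)))"
    by (simp only: pd_cmult[OF smooth_mult[OF smooth_factor smooth_factor]]
        pd_mult[OF smooth_factor smooth_factor] pd_factor)
  then show ?thesis
    by (intro ext) (simp only: distrib_left if_distrib[of "\<lambda>x. x * _"] if_distrib[of "\<lambda>x. _ * x"]
        mult_1_left mult_1_right mult_zero_left mult_zero_right mult.assoc)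
qed

lemma pd_Wfree:
  assumes "m \<le> NN" "n \<le> NN"
  shows "pd m n (Wfree NN V \<kappa> E) = Wfree_grad V \<kappa> E m n"
proof
  fix J
  let ?A = "complex_of_real (V / 2)"
  let ?B = "\<lambda>x y. complex_of_real (1 / (E y + E x))"
  let ?c = "\<lambda>x y. if y = x then complex_of_real \<kappa> else 0"
  have "pd m n (Wfree NN V \<kappa> E) J
      = (\<Sum>x\<le>NN. \<Sum>y\<le>NN. pd m n (\<lambda>J. ?A * (J y x - ?c x y) * ?B x y * (J x y - ?c x y)) J)"
    unfolding Wfree_def[abs_def]
    by (rule fun_cong[OF pd_double_sum]) (intro smooth_mult smooth_diff smooth_const smooth_entry)
  also have "\<dots> = (\<Sum>x\<le>NN. \<Sum>y\<le>NN. if y = m \<and> x = n then ?A * ?B x y * (J x y - ?c x y) else 0)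
      + (\<Sum>x\<le>NN. \<Sum>y\<le>NN. if x = m \<and> y = n then ?A * ?B x y * (J y x - ?c x y) else 0)"
    by (simp only: pd_Wfree_summand sum.distrib)
  also have "\<dots> = ?A * ?B n m * (J n m - ?c n m) + ?A * ?B m n * (J n m - ?c m n)"
    using assms by (simp only: double_sum_kronecker)
  also have "\<dots> = (?A * ?B n m + ?A * ?B n m) * (J n m - ?c n m)"
    by (simp only: add.commute[of "E n"] eq_commute[of n m] distrib_right)
  also have "?A * ?B n m + ?A * ?B n m = complex_of_real (V / (E m + E n))"
  proof -
    have "V / 2 * (1 / (E m + E n)) = V / (E m + E n) / 2"
      by simp
    then have "V / 2 * (1 / (E m + E n)) + V / 2 * (1 / (E m + E n)) = V / (E m + E n)"
      by (simp only: field_sum_of_halves)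
    then show ?thesis by (metis of_real_add of_real_mult)
  qed
  also have "\<dots> * (J n m - ?c n m) = Wfree_grad V \<kappa> E m n J"
    by (simp add: Wfree_grad_def)
  finally show "pd m n (Wfree NN V \<kappa> E) J = Wfree_grad V \<kappa> E m n J" .
qed

definition Zfree :: "nat \<Rightarrow> real \<Rightarrow> real \<Rightarrow> (nat \<Rightarrow> real) \<Rightarrow> src \<Rightarrow> complex" where
  "Zfree NN V \<kappa> E = (\<lambda>J. exp (Wfree NN V \<kappa> E J))"

lemma smooth_Zfree: "smooth (Zfree NN V \<kappa> E)"
  unfolding Zfree_def by (intro smooth_exp smooth_Wfree)

lemma pd_Zfree: "m \<le> NN \<Longrightarrow> n \<le> NN \<Longrightarrow>
    pd m n (Zfree NN V \<kappa> E) = (\<lambda>J. Zfree NN V \<kappa> E J * Wfree_grad V \<kappa> E m n J)"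
  unfolding Zfree_def by (simp add: pd_exp smooth_Wfree pd_Wfree)

lemma pd_Zfree_off_diagonal: "p \<le> NN \<Longrightarrow> q \<le> NN \<Longrightarrow> p \<noteq> q \<Longrightarrow>
    pd p q (Zfree NN V \<kappa> E) = (\<lambda>J. complex_of_real (V / (E p + E q)) * (J q p * Zfree NN V \<kappa> E J))"
  by (rule ext) (simp add: pd_Zfree Wfree_grad_def)

lemma pd_Wfree_grad:
  assumes "p \<noteq> q"
  shows "pd p l (Wfree_grad V \<kappa> E l q) = (\<lambda>J. 0)"
proof -
  have "pd p l (Wfree_grad V \<kappa> E l q) = (\<lambda>J. complex_of_real (V / (E l + E q))
      * pd p l (\<lambda>J. J q l - (if l = q then complex_of_real \<kappa> else 0)) J)"
    unfolding Wfree_grad_def[abs_def]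
    by (rule pd_cmult) (intro smooth_diff smooth_entry smooth_const)
  also have "\<dots> = (\<lambda>J. 0)"
    using assms by (simp add: pd_diff smooth_entry smooth_const pd_entry)
  finally show ?thesis .
qed

lemma pd_pd_Zfree: "p \<le> NN \<Longrightarrow> l \<le> NN \<Longrightarrow> q \<le> NN \<Longrightarrow> p \<noteq> q \<Longrightarrow>
    pd p l (pd l q (Zfree NN V \<kappa> E))
      = (\<lambda>J. Zfree NN V \<kappa> E J * (Wfree_grad V \<kappa> E p l J * Wfree_grad V \<kappa> E l q J))"
  by (simp add: pd_Zfree pd_mult smooth_Zfree smooth_Wfree_grad pd_Wfree_grad mult.assoc)

text \<open>The \<open>\<kappa>\<close>-terms form a telescoping correction that vanishes after summing over \<open>l\<close>.\<close>

lemma Wfree_grad_ward_identity: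
  assumes "\<And>m. E m > 0" "V \<noteq> 0" "p \<noteq> q"
  shows "complex_of_real ((E p - E q) / V) * (Wfree_grad V \<kappa> E p l J * Wfree_grad V \<kappa> E l q J)
    = J l p * Wfree_grad V \<kappa> E l q J - J q l * Wfree_grad V \<kappa> E p l J
      + complex_of_real (V * \<kappa> / (E p + E q)) * J q p
        * ((if l = q then 1 else 0) - (if l = p then 1 else 0))"
proof -
  have "complex_of_real (E x) + complex_of_real (E y) \<noteq> 0" for x y
    using add_pos_pos[OF assms(1)[of x] assms(1)[of y]] by (simp flip: of_real_add)
  moreover have "complex_of_real (E x) \<noteq> 0" for x
    using assms(1)[of x] by simp
  moreover have "complex_of_real V \<noteq> 0"
    using assms(2) by simp
  ultimately show ?thesis
    using assms(3) unfolding Wfree_grad_def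
    by (cases "l = p"; cases "l = q") (simp_all add: divide_simps, simp_all add: algebra_simps)
qed

lemma ward_identity_Zfree:
  assumes "\<And>m. E m > 0" "V \<noteq> 0" "p \<noteq> q" "p \<le> NN" "q \<le> NN"
  shows "(\<lambda>J. complex_of_real ((E p - E q) / V) * pd_chain NN p q (Zfree NN V \<kappa> E) J)
    = ward_op NN p q (Zfree NN V \<kappa> E)"
proof
  fix J
  let ?Z = "Zfree NN V \<kappa> E J"
  let ?w = "Wfree_grad V \<kappa> E"
  let ?K = "complex_of_real (V * \<kappa> / (E p + E q)) * J q p"
  have "(\<Sum>l\<le>NN. (if l = q then 1 else 0) - (if l = p then 1 else (0::complex))) = 0"
    using assms(4,5) by (simp add: sum_subtractf sum.delta')
  then have telescope: "(\<Sum>l\<le>NN. ?K * ((if l = q then 1 else 0) - (if l = p then 1 else 0))) = 0"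
    by (simp only: sum_distrib_left[symmetric] mult_zero_right)
  have ward: "complex_of_real ((E p - E q) / V) * (?w p l J * ?w l q J)
      = (J l p * ?w l q J - J q l * ?w p l J)
        + ?K * ((if l = q then 1 else 0) - (if l = p then 1 else 0))"
    for l by (rule Wfree_grad_ward_identity[OF assms(1-3)])
  have "complex_of_real ((E p - E q) / V) * pd_chain NN p q (Zfree NN V \<kappa> E) J
     = ?Z * (\<Sum>l\<le>NN. complex_of_real ((E p - E q) / V) * (?w p l J * ?w l q J))"
    unfolding pd_chain_def using assms(3-5)
    by (simp add: pd_pd_Zfree sum_distrib_left algebra_simps)
  also have "\<dots> = ?Z * ((\<Sum>l\<le>NN. J l p * ?w l q J - J q l * ?w p l J)
      + (\<Sum>l\<le>NN. ?K * ((if l = q then 1 else 0) - (if l = p then 1 else 0))))"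
    by (simp only: ward sum.distrib)
  also have "\<dots> = ward_op NN p q (Zfree NN V \<kappa> E) J"
    unfolding telescope ward_op_def using assms(3-5)
    by (simp add: pd_Zfree sum_distrib_left algebra_simps)
  finally show "complex_of_real ((E p - E q) / V) * pd_chain NN p q (Zfree NN V \<kappa> E) J
    = ward_op NN p q (Zfree NN V \<kappa> E) J" .
qed

section \<open>Schwinger-Dyson equation for the coefficients of Z\<close>

lemma pd_Delta_pow_Zfree:
  assumes Epos: "\<And>m. E m > 0" and V: "V \<noteq> 0" and pq: "p \<noteq> q" "p \<le> NN" "q \<le> NN"
  shows "complex_of_real ((E p)\<^sup>2 - (E q)\<^sup>2) * pd p q ((Delta NN ^^ k) (Zfree NN V \<kappa> E)) J
    = complex_of_real (V * (E p - E q)) * (J q p * (Delta NN ^^ k) (Zfree NN V \<kappa> E) J)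
      + of_nat (3 * k) * complex_of_real (V\<^sup>2)
        * ward_op NN p q ((Delta NN ^^ (k - 1)) (Zfree NN V \<kappa> E)) J"
proof -
  let ?Z = "Zfree NN V \<kappa> E"
  let ?C = "pd_chain NN p q ((Delta NN ^^ (k - 1)) ?Z) J"
  have "pd p q ((Delta NN ^^ k) ?Z)
      = (Delta NN ^^ k) (\<lambda>J. complex_of_real (V / (E p + E q)) * (J q p * ?Z J))"
    using pq by (simp add: Delta_pow_pd_commute[OF smooth_Zfree, symmetric] pd_Zfree_off_diagonal)
  also have "\<dots> = (\<lambda>J. complex_of_real (V / (E p + E q))
      * (J q p * (Delta NN ^^ k) ?Z J + of_nat (3 * k) * pd_chain NN p q ((Delta NN ^^ (k - 1)) ?Z) J))"
    by (simp only: Delta_pow_cmult[OF smooth_mult[OF smooth_entry smooth_Zfree]]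
        Delta_pow_entry_mult[OF smooth_Zfree pq(2,3)])
  finally have pd_eq: "pd p q ((Delta NN ^^ k) ?Z) J
      = complex_of_real (V / (E p + E q)) * (J q p * (Delta NN ^^ k) ?Z J + of_nat (3 * k) * ?C)"
    by (rule fun_cong)
  have "ward_op NN p q ((Delta NN ^^ (k - 1)) ?Z) = (Delta NN ^^ (k - 1)) (ward_op NN p q ?Z)"
    using pq by (simp add: Delta_pow_ward_op_commute smooth_Zfree)
  also have "\<dots> = (\<lambda>J. complex_of_real ((E p - E q) / V)
      * pd_chain NN p q ((Delta NN ^^ (k - 1)) ?Z) J)"
    by (simp only: ward_identity_Zfree[OF Epos V pq, symmetric]
        Delta_pow_cmult[OF smooth_pd_chain[OF smooth_Zfree]]
        Delta_pow_pd_chain_commute[OF smooth_Zfree])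
  finally have ward_eq: "ward_op NN p q ((Delta NN ^^ (k - 1)) ?Z) J
      = complex_of_real ((E p - E q) / V) * ?C"
    by (rule fun_cong)
  define R a b where "R = complex_of_real ((E p)\<^sup>2 - (E q)\<^sup>2)"
    and "a = complex_of_real (V / (E p + E q))" and "b = complex_of_real ((E p - E q) / V)"
  have "E p + E q \<noteq> 0"
    using Epos[of p] Epos[of q] by simp
  then have "((E p)\<^sup>2 - (E q)\<^sup>2) * (V / (E p + E q)) = V * (E p - E q)"
    and "V * (E p - E q) = V\<^sup>2 * ((E p - E q) / V)"
    using V by (simp_all add: power2_eq_square field_simps)
  then have "R * a = complex_of_real (V * (E p - E q))"
    and "complex_of_real (V * (E p - E q)) = complex_of_real (V\<^sup>2) * b"
    unfolding R_def a_def b_def by (metis of_real_mult)+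
  moreover have "R * (a * (X + n * C)) = (R * a) * X + n * ((R * a) * C)" for X n C
    by (simp add: algebra_simps)
  ultimately show ?thesis
    unfolding pd_eq ward_eq R_def[symmetric] a_def[symmetric] b_def[symmetric]
    by (simp add: mult.assoc)
qed

lemma Zfps_nth: "Zfps NN V \<kappa> E J $ k = complex_of_real (- 1 / (3 * V\<^sup>2)) ^ k / of_nat (fact k)
    * (Delta NN ^^ k) (Zfree NN V \<kappa> E) J"
  by (simp add: Zfps_def Zfree_def)

lemma smooth_Zfps_nth: "smooth (\<lambda>J. Zfps NN V \<kappa> E J $ k)"
  unfolding Zfps_nth by (intro smooth_mult smooth_const smooth_Delta_pow smooth_Zfree)

lemma perturbative_coefficient_Suc:
  assumes "V \<noteq> 0"
  defines "t \<equiv> complex_of_real (- 1 / (3 * V\<^sup>2))"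
  shows "t ^ Suc j / of_nat (fact (Suc j)) * (of_nat (3 * Suc j) * complex_of_real (V\<^sup>2))
    = - (t ^ j / of_nat (fact j))"
proof -
  define v n F where "v = complex_of_real (V\<^sup>2)" and "n = (of_nat (Suc j) :: complex)"
    and "F = (of_nat (fact j) :: complex)"
  have "t * (3 * v) = complex_of_real (- 1 / (3 * V\<^sup>2) * (3 * V\<^sup>2))"
    unfolding t_def v_def by simp
  also have "\<dots> = - 1"
    using assms(1) by simp
  finally have t: "t * (3 * v) = - 1" .
  have "n \<noteq> 0" "F \<noteq> 0"
    unfolding n_def F_def by (simp_all only: of_nat_eq_0_iff fact_nonzero) simp
  then have "t * t ^ j / (n * F) * (3 * n * v) = (t * (3 * v)) * (t ^ j / F) * (n / n)"
    by (simp add: field_simps)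
  also have "\<dots> = - (t ^ j / F)"
    using t \<open>n \<noteq> 0\<close> by simp
  finally have "t * t ^ j / (n * F) * (3 * n * v) = - (t ^ j / F)" .
  moreover have "of_nat (fact (Suc j)) = n * F" "of_nat (3 * Suc j) = 3 * n"
    unfolding n_def F_def by (simp_all only: fact_Suc of_nat_mult of_nat_id of_nat_numeral)
  ultimately show ?thesis
    by (simp only: power_Suc v_def[symmetric] F_def[symmetric])
qed

lemma pd_Zfps_nth:
  assumes Epos: "\<And>m. E m > 0" and V: "V \<noteq> 0" and pq: "p \<noteq> q" "p \<le> NN" "q \<le> NN"
  shows "complex_of_real ((E p)\<^sup>2 - (E q)\<^sup>2) * pd p q (\<lambda>J. Zfps NN V \<kappa> E J $ k) J
    = complex_of_real (V * (E p - E q)) * (J q p * Zfps NN V \<kappa> E J $ k)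
      - (if k = 0 then 0 else ward_op NN p q (\<lambda>J. Zfps NN V \<kappa> E J $ (k - 1)) J)"
proof -
  let ?s = "\<lambda>k. complex_of_real (- 1 / (3 * V\<^sup>2)) ^ k / of_nat (fact k)"
  let ?D = "\<lambda>k. (Delta NN ^^ k) (Zfree NN V \<kappa> E)"
  have Zfps_nth': "(\<lambda>J. Zfps NN V \<kappa> E J $ k) = (\<lambda>J. ?s k * ?D k J)" for k
    by (simp add: Zfps_nth)
  have ward_term: "?s k * (of_nat (3 * k) * complex_of_real (V\<^sup>2)) * ward_op NN p q (?D (k - 1)) J
     = - (if k = 0 then 0 else ward_op NN p q (\<lambda>J. Zfps NN V \<kappa> E J $ (k - 1)) J)"
  proof (cases k)
    case (Suc j)
    have "ward_op NN p q (\<lambda>J. Zfps NN V \<kappa> E J $ j) J = ?s j * ward_op NN p q (?D j) J"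
      unfolding Zfps_nth' by (simp only: ward_op_cmult[OF smooth_Delta_pow[OF smooth_Zfree]])
    then show ?thesis
      unfolding Suc
      by (simp only: perturbative_coefficient_Suc[OF V] diff_Suc_1 nat.distinct(2) if_False
          mult_minus_left)
  qed simp
  have "complex_of_real ((E p)\<^sup>2 - (E q)\<^sup>2) * pd p q (\<lambda>J. Zfps NN V \<kappa> E J $ k) J
     = ?s k * (complex_of_real ((E p)\<^sup>2 - (E q)\<^sup>2) * pd p q (?D k) J)"
    unfolding Zfps_nth' pd_cmult[OF smooth_Delta_pow[OF smooth_Zfree]] by (rule mult.left_commute)
  also have "\<dots> = ?s k * (complex_of_real (V * (E p - E q)) * (J q p * ?D k J)
      + of_nat (3 * k) * complex_of_real (V\<^sup>2) * ward_op NN p q (?D (k - 1)) J)"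
    by (simp only: pd_Delta_pow_Zfree[where E = E, OF Epos V pq])
  also have "\<dots> = complex_of_real (V * (E p - E q)) * (J q p * Zfps NN V \<kappa> E J $ k)
      + ?s k * (of_nat (3 * k) * complex_of_real (V\<^sup>2)) * ward_op NN p q (?D (k - 1)) J"
    by (simp only: Zfps_nth distrib_left mult_ac)
  finally show ?thesis
    unfolding ward_term by simp
qed

definition smooth_fps :: "(src \<Rightarrow> complex fps) \<Rightarrow> bool" where
  "smooth_fps P \<longleftrightarrow> (\<forall>k. smooth (\<lambda>J. P J $ k))"

definition pd_fps :: "nat \<Rightarrow> nat \<Rightarrow> (src \<Rightarrow> complex fps) \<Rightarrow> src \<Rightarrow> complex fps" where
  "pd_fps m n P = (\<lambda>J. Abs_fps (\<lambda>k. pd m n (\<lambda>J'. P J' $ k) J))"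

lemma pd_fps_nth: "pd_fps m n P J $ k = pd m n (\<lambda>J. P J $ k) J"
  by (simp add: pd_fps_def)

lemma smooth_fpsD: "smooth_fps P \<Longrightarrow> smooth (\<lambda>J. P J $ k)"
  by (simp add: smooth_fps_def)

lemma smooth_fps_add: "smooth_fps P \<Longrightarrow> smooth_fps Q \<Longrightarrow> smooth_fps (\<lambda>J. P J + Q J)"
  unfolding smooth_fps_def by (auto intro: smooth_add)

lemma smooth_fps_diff: "smooth_fps P \<Longrightarrow> smooth_fps Q \<Longrightarrow> smooth_fps (\<lambda>J. P J - Q J)"
  unfolding smooth_fps_def by (auto intro: smooth_diff)

lemma smooth_fps_mult: "smooth_fps P \<Longrightarrow> smooth_fps Q \<Longrightarrow> smooth_fps (\<lambda>J. P J * Q J)"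
  unfolding smooth_fps_def fps_mult_nth by (auto intro!: smooth_sum smooth_mult)

lemma smooth_fps_const: "smooth_fps (\<lambda>J. F)"
  unfolding smooth_fps_def by (auto intro: smooth_const)

lemma smooth_fps_fps_const: "smooth f \<Longrightarrow> smooth_fps (\<lambda>J. fps_const (f J))"
  unfolding smooth_fps_def by (auto intro: smooth_if)

lemma smooth_fps_deriv: "smooth_fps P \<Longrightarrow> smooth_fps (\<lambda>J. fps_deriv (P J))"
  unfolding smooth_fps_def by (auto intro: smooth_mult smooth_const)

lemma pd_fps_add: "smooth_fps P \<Longrightarrow> smooth_fps Q \<Longrightarrow>
    pd_fps m n (\<lambda>J. P J + Q J) = (\<lambda>J. pd_fps m n P J + pd_fps m n Q J)"
  by (auto intro!: ext fps_ext simp: pd_fps_nth pd_add smooth_fpsD)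

lemma pd_fps_diff: "smooth_fps P \<Longrightarrow> smooth_fps Q \<Longrightarrow>
    pd_fps m n (\<lambda>J. P J - Q J) = (\<lambda>J. pd_fps m n P J - pd_fps m n Q J)"
  by (auto intro!: ext fps_ext simp: pd_fps_nth pd_diff smooth_fpsD)

lemma pd_fps_const: "pd_fps m n (\<lambda>J. F) = (\<lambda>J. 0)"
  by (auto intro!: ext fps_ext simp: pd_fps_nth)

lemma pd_fps_fps_const: "smooth f \<Longrightarrow> pd_fps m n (\<lambda>J. fps_const (f J)) = (\<lambda>J. fps_const (pd m n f J))"
  by (intro ext fps_ext) (simp add: pd_fps_nth pd_if)

lemma pd_fps_deriv: "smooth_fps P \<Longrightarrow>
    pd_fps m n (\<lambda>J. fps_deriv (P J)) = (\<lambda>J. fps_deriv (pd_fps m n P J))"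
  by (auto intro!: ext fps_ext simp: pd_fps_nth pd_cmult smooth_fpsD)

lemma pd_fps_mult:
  assumes "smooth_fps P" "smooth_fps Q"
  shows "pd_fps m n (\<lambda>J. P J * Q J) = (\<lambda>J. pd_fps m n P J * Q J + P J * pd_fps m n Q J)"
proof (intro ext fps_ext)
  fix J k
  have "pd_fps m n (\<lambda>J. P J * Q J) J $ k = pd m n (\<lambda>J. \<Sum>i=0..k. P J $ i * Q J $ (k - i)) J"
    by (simp add: pd_fps_nth fps_mult_nth)
  also have "\<dots> = (\<Sum>i=0..k. pd m n (\<lambda>J. P J $ i) J * Q J $ (k - i)
      + P J $ i * pd m n (\<lambda>J. Q J $ (k - i)) J)"
    using assms by (simp add: pd_sum pd_mult smooth_fpsD smooth_mult)
  also have "\<dots> = (pd_fps m n P J * Q J + P J * pd_fps m n Q J) $ k"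
    by (simp add: fps_mult_nth pd_fps_nth sum.distrib)
  finally show "pd_fps m n (\<lambda>J. P J * Q J) J $ k
      = (pd_fps m n P J * Q J + P J * pd_fps m n Q J) $ k" .
qed

lemma smooth_fps_inverse:
  fixes P :: "src \<Rightarrow> complex fps"
  assumes "smooth_fps P" "smooth (\<lambda>J. inverse (P J $ 0))"
  shows "smooth_fps (\<lambda>J. inverse (P J))"
proof -
  have "smooth (\<lambda>J. natfun_inverse (P J) k)" for k
  proof (induction k rule: less_induct)
    case (less k)
    show ?case
    proof (cases k)
      case (Suc n)
      have "smooth (\<lambda>J. - inverse (P J $ 0)
          * (\<Sum>j\<in>{1..Suc n}. P J $ j * natfun_inverse (P J) (Suc n - j)))"
        using less Suc assms
        by (intro smooth_mult smooth_sum smooth_diff[of "\<lambda>J. 0", simplified] smooth_const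
            smooth_fpsD) auto
      then show ?thesis
        using Suc by simp
    qed (use assms(2) in simp)
  qed
  then show ?thesis
    unfolding smooth_fps_def by (simp add: fps_inverse_def)
qed

lemma pd_fps_inverse:
  fixes P :: "src \<Rightarrow> complex fps"
  assumes P: "smooth_fps P" "smooth (\<lambda>J. inverse (P J $ 0))" and unit: "\<And>J. P J $ 0 \<noteq> 0"
  shows "pd_fps m n (\<lambda>J. inverse (P J)) = (\<lambda>J. - (pd_fps m n P J * inverse (P J) * inverse (P J)))"
proof
  fix J
  let ?dI = "pd_fps m n (\<lambda>J. inverse (P J)) J"
  have "(\<lambda>J. P J * inverse (P J)) = (\<lambda>J. 1)"
    using unit by (auto intro: inverse_mult_eq_1')
  then have "pd_fps m n P J * inverse (P J) + P J * ?dI = 0"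
    using pd_fps_mult[OF P(1) smooth_fps_inverse[OF P], of m n] pd_fps_const[of m n 1] by metis
  then have dI: "P J * ?dI = - (pd_fps m n P J * inverse (P J))"
    by (simp add: eq_neg_iff_add_eq_0 add.commute)
  have "?dI = inverse (P J) * (P J * ?dI)"
    using inverse_mult_eq_1[OF unit, of J] by (simp add: mult.assoc[symmetric])
  also have "\<dots> = - (pd_fps m n P J * inverse (P J) * inverse (P J))"
    unfolding dI by (simp add: ac_simps)
  finally show "?dI = - (pd_fps m n P J * inverse (P J) * inverse (P J))" .
qed

lemma fps_ln_compose_deriv:
  fixes H :: "'a::field_char_0 fps"
  assumes "H $ 0 = 0"
  shows "fps_deriv (fps_ln 1 oo H) = inverse (1 + H) * fps_deriv H"
proof -
  have "fps_deriv (fps_ln 1 oo H) = (fps_deriv (fps_ln 1) oo H) * fps_deriv H"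
    using assms by (rule fps_compose_deriv)
  also have "fps_deriv (fps_ln (1::'a)) = inverse (1 + fps_X)"
    by (simp add: fps_ln_deriv)
  also have "inverse (1 + fps_X) oo H = inverse ((1 + fps_X) oo H)"
    using assms by (intro fps_inverse_compose) auto
  also have "(1 + fps_X) oo H = 1 + H"
    using assms by (simp add: fps_compose_add_distrib)
  finally show ?thesis .
qed

lemma smooth_fps_inverse_one_plus:
  fixes H :: "src \<Rightarrow> complex fps"
  shows "smooth_fps H \<Longrightarrow> (\<And>J. H J $ 0 = 0) \<Longrightarrow> smooth_fps (\<lambda>J. inverse (1 + H J))"
  by (intro smooth_fps_inverse smooth_fps_add smooth_fps_const) (simp_all add: smooth_const)

lemma smooth_fps_ln_compose:
  fixes H :: "src \<Rightarrow> complex fps"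
  assumes H: "smooth_fps H" and H0: "\<And>J. H J $ 0 = 0"
  shows "smooth_fps (\<lambda>J. fps_ln 1 oo H J)"
  unfolding smooth_fps_def
proof
  fix k
  show "smooth (\<lambda>J. (fps_ln 1 oo H J) $ k)"
  proof (cases k)
    case (Suc n)
    have "of_nat (Suc n) * (fps_ln 1 oo H J) $ Suc n
        = (inverse (1 + H J) * fps_deriv (H J)) $ n" for J
      using arg_cong[OF fps_ln_compose_deriv[OF H0], of "\<lambda>F. F $ n"] by simp
    then have "(fps_ln 1 oo H J) $ Suc n
        = inverse (of_nat (Suc n)) * (inverse (1 + H J) * fps_deriv (H J)) $ n" for J
      by (simp add: field_simps del: of_nat_Suc)
    moreover have "smooth_fps (\<lambda>J. inverse (1 + H J) * fps_deriv (H J))"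
      by (intro smooth_fps_mult smooth_fps_inverse_one_plus smooth_fps_deriv H H0)
    ultimately show ?thesis
      using Suc by (simp add: smooth_mult smooth_const smooth_fpsD del: of_nat_Suc)
  qed (simp add: smooth_const)
qed

text \<open>Both sides have the same formal derivative and vanish at \<open>\<lambda> = 0\<close>.\<close>

lemma pd_fps_ln_compose:
  fixes H :: "src \<Rightarrow> complex fps"
  assumes H: "smooth_fps H" and H0: "\<And>J. H J $ 0 = 0"
  shows "pd_fps m n (\<lambda>J. fps_ln 1 oo H J) = (\<lambda>J. pd_fps m n H J * inverse (1 + H J))"
proof
  fix J
  let ?L = "\<lambda>J. fps_ln 1 oo H J"
  let ?I = "\<lambda>J. inverse (1 + H J)"
  let ?dH = "pd_fps m n H J"
  have unit: "(1 + H J) $ 0 \<noteq> 0" for J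
    using H0 by simp
  have pd_I: "pd_fps m n ?I J = - (?dH * ?I J * ?I J)"
    using pd_fps_inverse[of "\<lambda>J. 1 + H J", OF smooth_fps_add[OF smooth_fps_const H] _ unit, of m n]
      pd_fps_add[OF smooth_fps_const H, of m n 1] H0
    by (simp add: pd_fps_const smooth_const)
  have "fps_deriv (pd_fps m n ?L J) = pd_fps m n (\<lambda>J. ?I J * fps_deriv (H J)) J"
    using pd_fps_deriv[OF smooth_fps_ln_compose[OF H H0], of m n] H0
    by (simp add: fps_ln_compose_deriv)
  also have "\<dots> = - (?dH * ?I J * ?I J) * fps_deriv (H J) + ?I J * fps_deriv ?dH"
    using pd_fps_mult[OF smooth_fps_inverse_one_plus[OF H H0] smooth_fps_deriv[OF H], of m n]
      pd_fps_deriv[OF H, of m n] pd_I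
    by simp
  also have "\<dots> = fps_deriv (?dH * ?I J)"
    using unit[of J] by (simp add: fps_inverse_deriv power2_eq_square algebra_simps)
  finally have "pd_fps m n ?L J = fps_const (pd_fps m n ?L J $ 0 - (?dH * ?I J) $ 0) + ?dH * ?I J"
    by (simp only: fps_deriv_eq_iff)
  moreover have "pd_fps m n ?L J $ 0 = (?dH * ?I J) $ 0"
    using H0 by (simp add: pd_fps_nth)
  ultimately show "pd_fps m n ?L J = ?dH * ?I J"
    by simp
qed

section \<open>The logarithm of Z\<close>

context
  fixes NN :: nat and V \<kappa> :: real and E :: "nat \<Rightarrow> real"
begin

abbreviation "Z \<equiv> Zfps NN V \<kappa> E"
abbreviation "W \<equiv> Wfree NN V \<kappa> E"

text \<open>\<open>logZ J\<close> is a branch of \<open>log (Z J / Z 0)\<close> that is smooth in the source; it agrees with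
  \<open>fpslog\<close>, whose principal \<open>Ln\<close> may jump, only near \<open>J = 0\<close> (see \<open>fpslog_eq_logZ\<close>).\<close>

definition logZ_arg :: "src \<Rightarrow> complex fps" where
  "logZ_arg J = Z J * inverse (Z (\<lambda>_ _. 0)) * fps_const (exp (W (\<lambda>_ _. 0) - W J)) - 1"

definition logZ :: "src \<Rightarrow> complex fps" where
  "logZ J = fps_const (W J - W (\<lambda>_ _. 0)) + (fps_ln 1 oo logZ_arg J)"

lemma Zfps_nth_0: "Z J $ 0 = exp (W J)"
  by (simp add: Zfps_nth Zfree_def)

lemma smooth_fps_Zfps: "smooth_fps Z"
  unfolding smooth_fps_def by (simp add: smooth_Zfps_nth)

lemma logZ_arg_nth_0: "logZ_arg J $ 0 = 0"
  by (simp add: logZ_arg_def Zfps_nth_0 exp_diff field_simps)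

lemma smooth_fps_logZ_arg: "smooth_fps logZ_arg"
  unfolding logZ_arg_def[abs_def]
  by (intro smooth_fps_diff smooth_fps_mult smooth_fps_Zfps smooth_fps_const smooth_fps_fps_const
      smooth_exp smooth_diff smooth_const smooth_Wfree)

lemma smooth_fps_logZ: "smooth_fps logZ"
  unfolding logZ_def[abs_def]
  by (intro smooth_fps_add smooth_fps_ln_compose smooth_fps_logZ_arg logZ_arg_nth_0
      smooth_fps_fps_const smooth_diff smooth_Wfree smooth_const)

lemma smooth_logZ_nth: "smooth (\<lambda>J. logZ J $ k)"
  using smooth_fps_logZ by (rule smooth_fpsD)

lemma pd_fps_logZ_arg: "pd_fps m n logZ_arg J
    = (pd_fps m n Z J - Z J * fps_const (pd m n W J))
      * inverse (Z (\<lambda>_ _. 0)) * fps_const (exp (W (\<lambda>_ _. 0) - W J))"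
proof -
  let ?c = "\<lambda>J. exp (W (\<lambda>_ _. 0) - W J)"
  define C P where "C = fps_const (?c J)" and "P = fps_const (pd m n W J)"
  have smooth_c: "smooth ?c"
    by (intro smooth_exp smooth_diff smooth_const smooth_Wfree)
  have "pd m n ?c J = - (pd m n W J * ?c J)"
    by (simp add: pd_exp pd_diff smooth_diff smooth_const smooth_Wfree)
  then have pd_c: "fps_const (pd m n ?c J) = - (P * C)"
    by (simp add: P_def C_def)
  have smooth_quot: "smooth_fps (\<lambda>J. Z J * inverse (Z (\<lambda>_ _. 0)))"
    by (intro smooth_fps_mult smooth_fps_Zfps smooth_fps_const)
  have "pd_fps m n logZ_arg J = pd_fps m n (\<lambda>J. Z J * inverse (Z (\<lambda>_ _. 0))) J * C
      + Z J * inverse (Z (\<lambda>_ _. 0)) * fps_const (pd m n ?c J)"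
    unfolding logZ_arg_def[abs_def] C_def
    by (simp add: pd_fps_diff pd_fps_mult pd_fps_const pd_fps_fps_const smooth_c smooth_quot
        smooth_fps_mult smooth_fps_fps_const smooth_fps_const)
  also have "\<dots> = (pd_fps m n Z J - Z J * P) * inverse (Z (\<lambda>_ _. 0)) * C"
    unfolding pd_c
    by (simp add: pd_fps_mult pd_fps_const smooth_fps_Zfps smooth_fps_const algebra_simps)
  finally show ?thesis
    unfolding C_def P_def .
qed

lemma pd_fps_logZ: "pd_fps m n logZ J = pd_fps m n Z J * inverse (Z J)"
proof -
  define c where "c = exp (W (\<lambda>_ _. 0) - W J)"
  define C Ci P i0 iZ where "C = fps_const c" and "Ci = fps_const (inverse c)"
    and "P = fps_const (pd m n W J)" and "i0 = inverse (Z (\<lambda>_ _. 0))" and "iZ = inverse (Z J)"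
  have Z_unit: "Z J' $ 0 \<noteq> 0" for J'
    by (simp add: Zfps_nth_0)
  have "1 + logZ_arg J = Z J * i0 * C"
    by (simp add: logZ_arg_def c_def i0_def C_def)
  then have inverse_arg: "inverse (1 + logZ_arg J) = iZ * Z (\<lambda>_ _. 0) * Ci"
    using Z_unit by (simp add: iZ_def i0_def Ci_def C_def fps_inverse_mult fps_const_inverse)
  have units: "i0 * Z (\<lambda>_ _. 0) = 1" "Z J * iZ = 1" "C * Ci = 1"
    using Z_unit
    by (simp_all add: i0_def iZ_def C_def Ci_def c_def inverse_mult_eq_1 inverse_mult_eq_1')
  have "pd_fps m n logZ J = P + pd_fps m n logZ_arg J * inverse (1 + logZ_arg J)"
    unfolding logZ_def[abs_def] P_def
    by (simp add: pd_fps_add pd_fps_fps_const pd_fps_ln_compose pd_diff smooth_fps_fps_const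
        smooth_fps_ln_compose smooth_fps_logZ_arg logZ_arg_nth_0 smooth_diff smooth_Wfree smooth_const)
  also have "\<dots> = P + (pd_fps m n Z J - Z J * P) * iZ * (i0 * Z (\<lambda>_ _. 0)) * (C * Ci)"
    unfolding pd_fps_logZ_arg inverse_arg by (simp add: c_def C_def P_def i0_def mult_ac)
  also have "\<dots> = pd_fps m n Z J * iZ + P * (1 - Z J * iZ)"
    unfolding units(1,3) by (simp add: algebra_simps)
  finally show ?thesis
    using units(2) by (simp add: iZ_def)
qed

definition ward_op_fps :: "nat \<Rightarrow> nat \<Rightarrow> (src \<Rightarrow> complex fps) \<Rightarrow> src \<Rightarrow> complex fps" where
  "ward_op_fps p q G J =
    (\<Sum>l\<le>NN. fps_const (J l p) * pd_fps l q G J - fps_const (J q l) * pd_fps p l G J)"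

lemma ward_op_fps_nth: "ward_op_fps p q G J $ k = ward_op NN p q (\<lambda>J. G J $ k) J"
  unfolding ward_op_fps_def ward_op_def by (simp add: fps_sum_nth pd_fps_nth)

lemma pd_fps_Zfps_equation:
  assumes "\<And>m. E m > 0" "V \<noteq> 0" "p \<noteq> q" "p \<le> NN" "q \<le> NN"
  shows "fps_const (complex_of_real ((E p)\<^sup>2 - (E q)\<^sup>2)) * pd_fps p q Z J
     = fps_const (complex_of_real (V * (E p - E q)) * J q p) * Z J - fps_X * ward_op_fps p q Z J"
proof (rule fps_ext)
  show "(fps_const (complex_of_real ((E p)\<^sup>2 - (E q)\<^sup>2)) * pd_fps p q Z J) $ k
     = (fps_const (complex_of_real (V * (E p - E q)) * J q p) * Z J - fps_X * ward_op_fps p q Z J) $ k"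
    for k
    using pd_Zfps_nth[where E = E, OF assms, where \<kappa> = \<kappa> and k = k and J = J]
    by (simp add: pd_fps_nth ward_op_fps_nth mult.assoc)
qed

text \<open>Dividing by \<open>Z\<close> turns the Schwinger-Dyson equation for \<open>Z\<close> into one for \<open>logZ\<close>
  in which the inhomogeneity has no \<open>\<lambda>\<close>-dependence.\<close>

lemma pd_fps_logZ_equation:
  assumes "\<And>m. E m > 0" "V \<noteq> 0" "p \<noteq> q" "p \<le> NN" "q \<le> NN"
  shows "fps_const (complex_of_real ((E p)\<^sup>2 - (E q)\<^sup>2)) * pd_fps p q logZ J
     = fps_const (complex_of_real (V * (E p - E q)) * J q p) - fps_X * ward_op_fps p q logZ J"
proof -
  let ?iZ = "inverse (Z J)"
  have Z_iZ: "Z J * ?iZ = 1"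
    by (rule inverse_mult_eq_1') (simp add: Zfps_nth_0)
  have ward_logZ: "ward_op_fps p q logZ J = ward_op_fps p q Z J * ?iZ"
    unfolding ward_op_fps_def pd_fps_logZ by (simp add: sum_distrib_left algebra_simps)
  have "fps_const (complex_of_real ((E p)\<^sup>2 - (E q)\<^sup>2)) * pd_fps p q logZ J
     = (fps_const (complex_of_real ((E p)\<^sup>2 - (E q)\<^sup>2)) * pd_fps p q Z J) * ?iZ"
    unfolding pd_fps_logZ by (simp add: mult.assoc)
  also have "\<dots> = fps_const (complex_of_real (V * (E p - E q)) * J q p) * (Z J * ?iZ)
      - fps_X * (ward_op_fps p q Z J * ?iZ)"
    unfolding pd_fps_Zfps_equation[OF assms] by (simp add: algebra_simps)
  finally show ?thesis
    unfolding Z_iZ ward_logZ by simp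
qed

lemma pd_logZ_nth:
  assumes "\<And>m. E m > 0" "V \<noteq> 0" "p \<noteq> q" "p \<le> NN" "q \<le> NN"
  shows "complex_of_real ((E p)\<^sup>2 - (E q)\<^sup>2) * pd p q (\<lambda>J. logZ J $ k) J
     = (if k = 0 then complex_of_real (V * (E p - E q)) * J q p else 0)
       - (if k = 0 then 0 else ward_op NN p q (\<lambda>J. logZ J $ (k - 1)) J)"
  using arg_cong[OF pd_fps_logZ_equation[OF assms, of J], of "\<lambda>F. F $ k"]
  by (simp add: pd_fps_nth ward_op_fps_nth)

lemma fpslog_eq_logZ:
  assumes "cmod (W J - W (\<lambda>_ _. 0)) < 1"
  shows "fpslog (Z J / Z (\<lambda>_ _. 0)) = logZ J"
proof -
  have Z_unit: "Z J' $ 0 \<noteq> 0" for J'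
    by (simp add: Zfps_nth_0)
  have ratio_0: "(Z J / Z (\<lambda>_ _. 0)) $ 0 = exp (W J - W (\<lambda>_ _. 0))"
    using Z_unit by (simp add: fps_divide_unit Zfps_nth_0 exp_diff field_simps)
  have "\<bar>Im (W J - W (\<lambda>_ _. 0))\<bar> < 1"
    using abs_Im_le_cmod[of "W J - W (\<lambda>_ _. 0)"] assms by linarith
  then have "Ln ((Z J / Z (\<lambda>_ _. 0)) $ 0) = W J - W (\<lambda>_ _. 0)"
    unfolding ratio_0 using pi_gt3 by (intro Ln_exp) linarith+
  moreover have "Z J / Z (\<lambda>_ _. 0) / fps_const ((Z J / Z (\<lambda>_ _. 0)) $ 0) - 1 = logZ_arg J"
    unfolding ratio_0 logZ_arg_def using Z_unit
    by (simp add: fps_divide_unit fps_const_inverse exp_minus[symmetric])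
  ultimately show ?thesis
    unfolding fpslog_def logZ_def by simp
qed

lemma Gcorr_nth_eq_pds_logZ:
  "Gcorr NN V \<kappa> E bs $ k = complex_of_real (V powi (int (length bs) - 2))
    * pds (concat (map cycle_pairs bs)) (\<lambda>J. logZ J $ k) (\<lambda>_ _. 0)"
proof -
  let ?U = "(\<lambda>J. W J - W (\<lambda>_ _. 0)) -` ball 0 1"
  have "open ?U"
    using smooth_continuous_on[OF smooth_diff[OF smooth_Wfree smooth_const]]
    by (simp add: continuous_on_open_vimage)
  moreover have "fpslog (Z J / Z (\<lambda>_ _. 0)) $ k = logZ J $ k" if "J \<in> ?U" for J
    using that by (simp add: fpslog_eq_logZ dist_norm norm_minus_commute)
  ultimately have "pds (concat (map cycle_pairs bs)) (\<lambda>J. fpslog (Z J / Z (\<lambda>_ _. 0)) $ k) (\<lambda>_ _. 0)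
     = pds (concat (map cycle_pairs bs)) (\<lambda>J. logZ J $ k) (\<lambda>_ _. 0)"
    by (intro pds_cong_open[of ?U]) auto
  then show ?thesis
    by (simp add: Gcorr_def dall_eq_pds)
qed

end

section \<open>Cutting a boundary cycle\<close>

lemma cycle_pairs_Cons: "cycle_pairs (a # rest) = zip (a # rest) (rest @ [a])"
  by (simp add: cycle_pairs_def)

lemma mem_cycle_pairs: "(u, v) \<in> set (cycle_pairs c) \<Longrightarrow> u \<in> set c \<and> v \<in> set c"
  by (cases c) (auto simp: cycle_pairs_def dest: set_zip_leftD set_zip_rightD)

lemma map_fst_cycle_pairs: "map fst (cycle_pairs c) = c"
  by (cases c) (simp_all add: cycle_pairs_def)

lemma map_fst_concat_cycle_pairs: "map fst (concat (map cycle_pairs cs)) = concat cs"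
  by (induction cs) (simp_all add: map_fst_cycle_pairs)

text \<open>Removing the edge \<open>(a\<^sub>1, a\<^sub>2)\<close> from the cycle \<open>a\<^sub>1 a\<^sub>2 \<dots> z\<close> leaves the path
  \<open>a\<^sub>2 \<dots> z a\<^sub>1\<close>; its unique edges into \<open>a\<^sub>1\<close> and out of \<open>a\<^sub>2\<close> are \<open>(z, a\<^sub>1)\<close> and
  \<open>(a\<^sub>2, y)\<close>, and deleting one of them and closing the rest of the path gives the cycles
  \<open>a\<^sub>2 \<dots> z\<close> and \<open>a\<^sub>1 y \<dots> z\<close>.\<close>

lemma cycle_minus_edge:
  fixes a1 a2 :: nat and rest :: "nat list" and T :: "nat list list"
  defines "R \<equiv> concat (map cycle_pairs T)"
    and "ds \<equiv> zip (a2 # rest) (rest @ [a1]) @ concat (map cycle_pairs T)"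
    and "z \<equiv> last (a2 # rest)" and "y \<equiv> hd (rest @ [a1])"
  assumes "distinct (concat ((a1 # a2 # rest) # T))"
  shows "distinct ds"
    and "(l, a1) \<in> set ds \<longleftrightarrow> l = z"
    and "(a2, l) \<in> set ds \<longleftrightarrow> l = y"
    and "remove1 (z, a1) ds = zip (butlast (a2 # rest)) rest @ R"
    and "zip (butlast (a2 # rest)) rest @ [(z, a2)] = cycle_pairs (a2 # rest)"
    and "remove1 (a2, y) ds = zip rest (tl (rest @ [a1])) @ R"
    and "(a1, y) # zip rest (tl (rest @ [a1])) = cycle_pairs (a1 # rest)"
proof -
  have not_in: "a1 \<notin> set rest" "a2 \<notin> set rest" "a1 \<notin> set (concat T)" "a2 \<notin> set (concat T)"
    using assms(5) by auto
  have split_last: "a2 # rest = butlast (a2 # rest) @ [z]"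
    unfolding z_def by simp
  have "length (butlast (a2 # rest)) = length rest"
    by simp
  note zip_last = zip_append[OF this]
  have path_end: "zip (a2 # rest) (rest @ [a1]) = zip (butlast (a2 # rest)) rest @ [(z, a1)]"
    and closed: "zip (a2 # rest) (rest @ [a2]) = zip (butlast (a2 # rest)) rest @ [(z, a2)]"
    by (subst split_last, simp only: zip_last zip_Cons_Cons zip_Nil)+
  have path_start: "zip (a2 # rest) (rest @ [a1]) = (a2, y) # zip rest (tl (rest @ [a1]))"
    and "zip (a1 # rest) (rest @ [a1]) = (a1, y) # zip rest (tl (rest @ [a1]))"
    unfolding y_def by (cases rest; simp)+
  then show "(a1, y) # zip rest (tl (rest @ [a1])) = cycle_pairs (a1 # rest)"
    by (simp add: cycle_pairs_Cons)
  show "zip (butlast (a2 # rest)) rest @ [(z, a2)] = cycle_pairs (a2 # rest)"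
    using closed by (simp add: cycle_pairs_Cons)
  have "distinct (map fst ds)"
    using assms(5) unfolding ds_def by (simp add: map_fst_concat_cycle_pairs)
  then show "distinct ds"
    by (simp add: distinct_map)
  show "(l, a1) \<in> set ds \<longleftrightarrow> l = z"
    unfolding ds_def path_end using not_in
    by (auto dest: set_zip_rightD mem_cycle_pairs)
  show "(a2, l) \<in> set ds \<longleftrightarrow> l = y"
    unfolding ds_def path_start using not_in
    by (auto dest: set_zip_leftD mem_cycle_pairs)
  show "remove1 (z, a1) ds = zip (butlast (a2 # rest)) rest @ R"
    unfolding ds_def R_def[symmetric] path_end using not_in
    by (auto simp: remove1_append dest: set_zip_rightD)
  show "remove1 (a2, y) ds = zip rest (tl (rest @ [a1])) @ R"
    unfolding ds_def R_def[symmetric] path_start by simp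
qed

lemma pds_entry_at_zero:
  assumes "distinct ds" "length ds \<ge> 2"
  shows "pds ds (\<lambda>J. J a b) (\<lambda>_ _. 0) = 0"
proof -
  have "remove1 (a, b) ds \<noteq> []"
    using assms(2) by (induction ds rule: induct_list012) auto
  then show ?thesis
    using pds_entry_mult_at_zero[OF assms(1) smooth_const, of a b 1] by (simp add: pds_const)
qed

lemma pds_ward_op_at_zero:
  assumes "distinct ds" "smooth f"
  shows "pds ds (ward_op NN p q f) (\<lambda>_ _. 0) = (\<Sum>l\<le>NN.
      (if (l, p) \<in> set ds then pds (remove1 (l, p) ds) (pd l q f) (\<lambda>_ _. 0) else 0)
    - (if (q, l) \<in> set ds then pds (remove1 (q, l) ds) (pd p l f) (\<lambda>_ _. 0) else 0))"
proof -
  have smooth_terms: "smooth (\<lambda>J. J l p * pd l q f J)" "smooth (\<lambda>J. J q l * pd p l f J)" for l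
    using assms(2) by (auto intro!: smooth_mult smooth_entry smooth_pd)
  then have "pds ds (ward_op NN p q f) (\<lambda>_ _. 0) = (\<Sum>l\<le>NN.
      pds ds (\<lambda>J. J l p * pd l q f J) (\<lambda>_ _. 0) - pds ds (\<lambda>J. J q l * pd p l f J) (\<lambda>_ _. 0))"
    unfolding ward_op_def by (simp add: pds_sum pds_diff smooth_diff)
  then show ?thesis
    using assms by (simp add: pds_entry_mult_at_zero smooth_pd)
qed

lemma pds_ward_op_cycle_minus_edge:
  fixes a1 a2 :: nat and rest :: "nat list" and T :: "nat list list"
  defines "R \<equiv> concat (map cycle_pairs T)"
  assumes "distinct (concat ((a1 # a2 # rest) # T))"
    and "\<forall>i\<in>set (concat ((a1 # a2 # rest) # T)). i \<le> NN" and "smooth f"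
  shows "pds (zip (a2 # rest) (rest @ [a1]) @ R) (ward_op NN a1 a2 f) (\<lambda>_ _. 0)
    = pds (cycle_pairs (a2 # rest) @ R) f (\<lambda>_ _. 0) - pds (cycle_pairs (a1 # rest) @ R) f (\<lambda>_ _. 0)"
proof -
  define ds z y where "ds = zip (a2 # rest) (rest @ [a1]) @ concat (map cycle_pairs T)"
    and "z = last (a2 # rest)" and "y = hd (rest @ [a1])"
  note cyc = cycle_minus_edge[OF assms(2), folded ds_def z_def y_def, folded R_def]
  have "z \<le> NN" "y \<le> NN"
    using assms(3) unfolding z_def y_def by (auto simp: hd_append)
  then have "pds ds (ward_op NN a1 a2 f) (\<lambda>_ _. 0)
      = pds (remove1 (z, a1) ds) (pd z a2 f) (\<lambda>_ _. 0)
        - pds (remove1 (a2, y) ds) (pd a1 y f) (\<lambda>_ _. 0)"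
    unfolding pds_ward_op_at_zero[OF cyc(1) assms(4)] cyc(2,3)
    by (simp add: sum_subtractf sum.delta')
  also have "pds (remove1 (z, a1) ds) (pd z a2 f) = pds (cycle_pairs (a2 # rest) @ R) f"
    using cyc(4) cyc(5)[symmetric]
    by (simp add: pds_append pds_pd_commute smooth_pds assms(4) flip: pds_Cons)
  also have "pds (remove1 (a2, y) ds) (pd a1 y f) = pds (cycle_pairs (a1 # rest) @ R) f"
    unfolding cyc(6) cyc(7)[symmetric] by (simp add: pds_pd_commute assms(4))
  finally show ?thesis
    unfolding ds_def R_def .
qed

text \<open>The \<open>\<lambda>\<^sup>0\<close> term of the Schwinger-Dyson equation is a single source entry, which the
  derivatives along the remaining \<open>\<ge> 2\<close> edges kill; this is where \<open>B \<ge> 2\<close> enters.\<close>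

lemma pds_logZ_nth_recursion:
  fixes NN a1 a2 :: nat and V \<kappa> :: real and E :: "nat \<Rightarrow> real"
    and rest :: "nat list" and T :: "nat list list"
  assumes Epos: "\<And>m. E m > 0" and V: "V \<noteq> 0"
    and dist: "distinct (concat ((a1 # a2 # rest) # T))"
    and range: "\<forall>i\<in>set (concat ((a1 # a2 # rest) # T)). i \<le> NN"
    and T: "T \<noteq> []" "\<forall>c\<in>set T. c \<noteq> []"
  defines "G \<equiv> \<lambda>cs k.
    pds (cycle_pairs cs @ concat (map cycle_pairs T)) (\<lambda>J. logZ NN V \<kappa> E J $ k) (\<lambda>_ _. 0)"
  shows "complex_of_real ((E a1)\<^sup>2 - (E a2)\<^sup>2) * G (a1 # a2 # rest) k
    = (if k = 0 then 0 else G (a1 # rest) (k - 1) - G (a2 # rest) (k - 1))"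
proof -
  let ?F = "\<lambda>k J. logZ NN V \<kappa> E J $ k"
  let ?Rc = "complex_of_real ((E a1)\<^sup>2 - (E a2)\<^sup>2)"
  define ds where "ds = zip (a2 # rest) (rest @ [a1]) @ concat (map cycle_pairs T)"
  have distinct_ds: "distinct ds"
    using cycle_minus_edge(1)[OF dist] by (simp add: ds_def)
  have "concat (map cycle_pairs T) \<noteq> []"
    using T by (cases T) (auto simp: cycle_pairs_def)
  then have length_ds: "length ds \<ge> 2"
    unfolding ds_def by (cases "concat (map cycle_pairs T)") auto
  have a1_a2: "a1 \<noteq> a2" "a1 \<le> NN" "a2 \<le> NN"
    using dist range by auto
  have "?Rc * G (a1 # a2 # rest) k = pds ds (\<lambda>J. ?Rc * pd a1 a2 (?F k) J) (\<lambda>_ _. 0)"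
    unfolding G_def ds_def
    by (simp add: cycle_pairs_def pds_pd_commute pds_cmult smooth_pd smooth_logZ_nth)
  also have "(\<lambda>J. ?Rc * pd a1 a2 (?F k) J) = (\<lambda>J.
      (if k = 0 then complex_of_real (V * (E a1 - E a2)) * J a2 a1 else 0)
      - (if k = 0 then 0 else ward_op NN a1 a2 (?F (k - 1)) J))"
    using pd_logZ_nth[where E = E, OF Epos V a1_a2] by (intro ext)
  finally have eq: "?Rc * G (a1 # a2 # rest) k = pds ds (\<lambda>J.
      (if k = 0 then complex_of_real (V * (E a1 - E a2)) * J a2 a1 else 0)
      - (if k = 0 then 0 else ward_op NN a1 a2 (?F (k - 1)) J)) (\<lambda>_ _. 0)" .
  show ?thesis
  proof (cases k)
    case 0
    then show ?thesis
      using eq pds_entry_at_zero[OF distinct_ds length_ds, of a2 a1]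
      by (simp add: pds_cmult smooth_entry)
  next
    case (Suc j)
    have "pds ds (\<lambda>J. - ward_op NN a1 a2 (?F j) J) = (\<lambda>J. - pds ds (ward_op NN a1 a2 (?F j)) J)"
      using pds_cmult[OF smooth_ward_op[OF smooth_logZ_nth], of ds "- 1"] by simp
    then show ?thesis
      using eq Suc pds_ward_op_cycle_minus_edge[OF dist range smooth_logZ_nth]
      by (simp add: G_def ds_def)
  qed
qed

lemma Gcorr_recursion:
  assumes Epos: "\<And>m. E m > 0" and V: "V \<noteq> 0"
    and "length bs \<ge> 2" "length (hd bs) \<ge> 2" "\<forall>b\<in>set bs. length b \<ge> 1"
    and "distinct (concat bs)" "\<forall>i\<in>set (concat bs). i \<le> NN"
    and E_ne: "E (hd bs ! 0) \<noteq> E (hd bs ! 1)"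
  shows "Gcorr NN V \<kappa> E bs =
    fps_X * fps_const (1 / complex_of_real ((E (hd bs ! 0))\<^sup>2 - (E (hd bs ! 1))\<^sup>2))
    * (Gcorr NN V \<kappa> E ((hd bs ! 0 # drop 2 (hd bs)) # tl bs)
       - Gcorr NN V \<kappa> E ((hd bs ! 1 # drop 2 (hd bs)) # tl bs))"
proof -
  obtain a1 a2 rest T where bs: "bs = (a1 # a2 # rest) # T"
    using assms(3,4) by (cases bs; cases "hd bs" rule: remdups_adj.cases) auto
  define G where "G = (\<lambda>cs k. pds (cycle_pairs cs @ concat (map cycle_pairs T))
    (\<lambda>J. logZ NN V \<kappa> E J $ k) (\<lambda>_ _. 0))"
  define Rc where "Rc = complex_of_real ((E a1)\<^sup>2 - (E a2)\<^sup>2)"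
  let ?Vp = "complex_of_real (V powi (int (Suc (length T)) - 2))"
  have "T \<noteq> []" "\<forall>c\<in>set T. c \<noteq> []"
    using assms(3,5) bs by auto
  then have recursion: "Rc * G (a1 # a2 # rest) k
      = (if k = 0 then 0 else G (a1 # rest) (k - 1) - G (a2 # rest) (k - 1))" for k
    using assms(6,7) unfolding bs Rc_def G_def
    by (intro pds_logZ_nth_recursion[where NN = NN and V = V and \<kappa> = \<kappa> and E = E, OF Epos V])
  have "(E a1)\<^sup>2 \<noteq> (E a2)\<^sup>2"
    using E_ne Epos[of a1] Epos[of a2] bs by (simp add: power2_eq_iff_nonneg less_imp_le)
  then have "Rc \<noteq> 0"
    unfolding Rc_def of_real_eq_0_iff by simp
  then have G_eq: "G (a1 # a2 # rest) k
      = (if k = 0 then 0 else (G (a1 # rest) (k - 1) - G (a2 # rest) (k - 1)) / Rc)" for k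
    using recursion[of k] by (auto simp: field_simps)
  have Gcorr_G: "Gcorr NN V \<kappa> E ((c # cs) # T) $ k = ?Vp * G (c # cs) k" for c cs k
    by (simp add: Gcorr_nth_eq_pds_logZ G_def)
  have hd_bs: "hd bs ! 0 = a1" "hd bs ! 1 = a2" "drop 2 (hd bs) = rest" "tl bs = T"
    using bs by simp_all
  show ?thesis
  proof (rule fps_ext)
    fix k
    have "Gcorr NN V \<kappa> E bs $ k = (if k = 0 then 0
        else 1 / Rc * (?Vp * G (a1 # rest) (k - 1) - ?Vp * G (a2 # rest) (k - 1)))"
      unfolding bs Gcorr_G G_eq by (simp add: field_simps)
    then show "Gcorr NN V \<kappa> E bs $ k = (fps_X * fps_const (1 / complex_of_real ((E (hd bs ! 0))\<^sup>2
        - (E (hd bs ! 1))\<^sup>2)) * (Gcorr NN V \<kappa> E ((hd bs ! 0 # drop 2 (hd bs)) # tl bs)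
        - Gcorr NN V \<kappa> E ((hd bs ! 1 # drop 2 (hd bs)) # tl bs))) $ k"
      unfolding hd_bs Rc_def[symmetric] by (cases k) (simp_all add: Gcorr_G mult.assoc)
  qed
qed

lemma Eval_pos:
  assumes "V > 0" "\<mu> > 0" "\<forall>x\<ge>0. e x \<ge> 0"
  shows "Eval \<mu> V e m > 0"
proof -
  have "e (real m / (\<mu>\<^sup>2 * V)) \<ge> 0"
    using assms by simp
  then show ?thesis
    unfolding Eval_def using assms(2) by (intro mult_pos_pos) auto
qed

lemma Eval_inj:
  assumes "V > 0" "\<mu> > 0" "strict_mono_on {0..} e" "m \<noteq> n"
  shows "Eval \<mu> V e m \<noteq> Eval \<mu> V e n"
proof
  assume "Eval \<mu> V e m = Eval \<mu> V e n"
  then have "e (real m / (\<mu>\<^sup>2 * V)) = e (real n / (\<mu>\<^sup>2 * V))"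
    using assms(2) unfolding Eval_def by simp
  then have "real n / (\<mu>\<^sup>2 * V) = real m / (\<mu>\<^sup>2 * V)"
    by (rule strict_mono_on_eqD[OF assms(3)]) (use assms(1,2) in simp_all)
  then show False
    using assms by (simp add: divide_cancel_right)
qed

theorem proposition3:
  fixes NN :: nat and V \<kappa> \<mu> :: real and e :: "real \<Rightarrow> real"
    and bs :: "nat list list"
  assumes "NN \<ge> 1" and "V > 0" and "\<mu> > 0"
    and "\<forall>x\<ge>0. e differentiable (at x within {0..})"
    and "strict_mono_on {0..} e" and "e 0 = 0" and "\<forall>x\<ge>0. e x \<ge> 0"
    and "length bs \<ge> 2" and "length (hd bs) \<ge> 2"
    and "\<forall>b\<in>set bs. length b \<ge> 1"
    and "distinct (concat bs)" and "\<forall>i\<in>set (concat bs). i \<le> NN"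
  shows "Gcorr NN V \<kappa> (Eval \<mu> V e) bs =
    fps_X * fps_const (1 / complex_of_real ((Eval \<mu> V e (hd bs ! 0))\<^sup>2 - (Eval \<mu> V e (hd bs ! 1))\<^sup>2))
    * (Gcorr NN V \<kappa> (Eval \<mu> V e) ((hd bs ! 0 # drop 2 (hd bs)) # tl bs)
       - Gcorr NN V \<kappa> (Eval \<mu> V e) ((hd bs ! 1 # drop 2 (hd bs)) # tl bs))"
proof (rule Gcorr_recursion)
  obtain x y zs where "hd bs = x # y # zs"
    using assms(9) by (cases "hd bs" rule: remdups_adj.cases) auto
  moreover have "distinct (hd bs)"
    using assms(8,11) by (cases bs) auto
  ultimately have "hd bs ! 0 \<noteq> hd bs ! 1"
    by simp
  then show "Eval \<mu> V e (hd bs ! 0) \<noteq> Eval \<mu> V e (hd bs ! 1)"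
    using assms(2,3,5) by (rule Eval_inj[rotated 3])
  show "Eval \<mu> V e m > 0" for m
    using assms(2,3,7) by (rule Eval_pos)
qed (use assms in auto)

end
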